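(* Let $q\ge3$ be a prime power, $\tau\ge0$, and $\epsilon\in(0,1)$ small. Let $(\hat\gamma,\hat\kappa)$, with $\hat\gamma\in[0,q-1)$, $\hat\kappa\in[0,\frac{q-1}{q})$ and $\hat\gamma+\hat\kappa=\tau$, maximize $(2\gamma-\kappa+1)H_q\!\left(\frac{\gamma}{2\gamma-\kappa+1}\right)-\gamma\log_q(q-1)+H_q(\kappa)$ over $\gamma\in[0,q-1)$, $\kappa\in[0,\frac{q-1}{q})$ with $\gamma+\kappa=\tau$. Then for all sufficiently large $n$, with probability at least $1-q^{-n}$, a random $\mathbb{F}_q$-linear insdel code $\mathcal{C}\subseteq\mathbb{F}_q^n$ of rate $$R=1-(2\hat\gamma-\hat\kappa+1)H_q\!\left(\frac{\hat\gamma}{2\hat\gamma-\hat\kappa+1}\right)+\hat\gamma\log_q(q-1)-H_q(\hat\kappa)-\epsilon$$ is $(\tau n,\exp(O(1/\epsilon)))$-list-decodable.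
   Context: The alphabet is the finite field $\mathbb{F}_q$. The insdel distance $d(\mathbf a,\mathbf b)$ between words (lengths may differ) is the minimum number of single-symbol insertions and deletions needed to transform $\mathbf a$ into $\mathbf b$. For $\mathbf u\in\mathbb{F}_q^n$ and real $z\ge0$, $\mathcal{B}(\mathbf u,z)=\{\mathbf v\in\bigcup_{i=\max\{n-z,0\}}^{n+z}\mathbb{F}_q^i: d(\mathbf u,\mathbf v)\le z\}$. A code $\mathcal{C}\subseteq\mathbb{F}_q^n$ is $(\tau n,L)$-list-decodable if for every nonnegative integer $m\in[\max(0,n-\tau n),n+\tau n]$ and every $\mathbf r\in\mathbb{F}_q^m$, $|\mathcal{B}(\mathbf r,\tau n)\cap\mathcal{C}|\le L$. A random $\mathbb{F}_q$-linear code of rate $R$ is the $\mathbb{F}_q$-span of $Rn$ linearly independent vectors chosen uniformly at random from $\mathbb{F}_q^n$. $H_q(x)=x\log_q(q-1)-x\log_qx-(1-x)\log_q(1-x)$ for $0<x<1$, $H_q(0)=H_q(1)=0$. *)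

theory Defs
  imports Complex_Main "HOL-Library.Cardinality"
begin

definition insdel_step :: "'a list \<Rightarrow> 'a list \<Rightarrow> bool" where
  "insdel_step a b \<longleftrightarrow>
     (\<exists>xs ys x. b = xs @ x # ys \<and> a = xs @ ys) \<or>
     (\<exists>xs ys x. a = xs @ x # ys \<and> b = xs @ ys)"

definition insdel_dist :: "'a list \<Rightarrow> 'a list \<Rightarrow> nat" where
  "insdel_dist a b = (LEAST k. (insdel_step ^^ k) a b)"

definition insdel_ball :: "'a list \<Rightarrow> real \<Rightarrow> 'a list set" where
  "insdel_ball u z = {v. max (real (length u) - z) 0 \<le> real (length v) \<and>
                          real (length v) \<le> real (length u) + z \<and>
                          real (insdel_dist u v) \<le> z}"

definition list_decodable :: "nat \<Rightarrow> 'a list set \<Rightarrow> real \<Rightarrow> real \<Rightarrow> bool" where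
  "list_decodable n C tau L \<longleftrightarrow>
     (\<forall>m::nat. \<forall>r::'a list.
        max 0 (real n - tau * real n) \<le> real m \<and> real m \<le> real n + tau * real n \<and>
        length r = m \<longrightarrow> real (card (insdel_ball r (tau * real n) \<inter> C)) \<le> L)"

definition Hq :: "real \<Rightarrow> real \<Rightarrow> real" where
  "Hq q x = (if x = 0 \<or> x = 1 then 0
             else x * log q (q - 1) - x * log q x - (1 - x) * log q (1 - x))"

definition vadd :: "'a::field list \<Rightarrow> 'a list \<Rightarrow> 'a list" where
  "vadd u v = map2 (+) u v"

definition lincomb :: "nat \<Rightarrow> 'a::field list list \<Rightarrow> 'a list \<Rightarrow> 'a list" where
  "lincomb n vs cs = foldr vadd (map2 (\<lambda>c v. map ((*) c) v) cs vs) (replicate n 0)"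

definition lin_span :: "nat \<Rightarrow> 'a::field list list \<Rightarrow> 'a list set" where
  "lin_span n vs = {lincomb n vs cs | cs. length cs = length vs}"

definition lin_indep :: "nat \<Rightarrow> 'a::field list list \<Rightarrow> bool" where
  "lin_indep n vs \<longleftrightarrow>
     (\<forall>cs. length cs = length vs \<and> lincomb n vs cs = replicate n 0 \<longrightarrow> set cs \<subseteq> {0})"

text \<open>Sample space of a random linear code of dimension k in F_q^n: ordered k-tuples of
  linearly independent vectors, each tuple equally likely (uniform sampling conditioned on
  independence).\<close>
definition indep_tuples :: "nat \<Rightarrow> nat \<Rightarrow> 'a::field list list set" where
  "indep_tuples n k = {vs. length vs = k \<and> (\<forall>v\<in>set vs. length v = n) \<and> lin_indep n vs}"

definition insdel_obj :: "real \<Rightarrow> real \<Rightarrow> real \<Rightarrow> real" where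
  "insdel_obj q g k = (2*g - k + 1) * Hq q (g / (2*g - k + 1)) - g * log q (q - 1) + Hq q k"

end

theory Submission
  imports Defs "HOL-Library.Sublist" "HOL-Real_Asymp.Real_Asymp"
begin

text \<open>
  A generator tuple vs spans a code that fails to be list-decodable only if some received word r
  has more than q^t codewords in its insdel ball; greedily, t + 1 of them have linearly
  independent message vectors. For a uniformly random tuple, codewords with independent message
  vectors are independent and uniform, so this happens with probability at most
  (|B| / q^n)^(t+1), where B is the set of words of length n within distance tau n of r.
  Every such word is a supersequence of a long common subsequence of r, and counting subsequences
  and supersequences bounds |B| by (n + 1) q^(n M), with M the maximum of the objective function.
  A union bound over r and the message vectors gives failure probability at most q^(-n) as soon
  as t eps \<ge> 4. For tau \<ge> (q - 1)/q one has M \<ge> 1, the rate is negative and the code is zero.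
\<close>

section \<open>Linear combinations of list vectors\<close>

definition lin_comb :: "nat \<Rightarrow> 'a::field list list \<Rightarrow> 'a list \<Rightarrow> 'a list" where
  "lin_comb n vs c = map (\<lambda>p. \<Sum>i<length c. c!i * vs!i!p) [0..<n]"

definition lin_indep_on :: "nat \<Rightarrow> nat set \<Rightarrow> (nat \<Rightarrow> 'a::field list) \<Rightarrow> bool" where
  "lin_indep_on k I c \<longleftrightarrow> (\<forall>d. (\<forall>p<k. (\<Sum>i\<in>I. d i * c i ! p) = 0) \<longrightarrow> (\<forall>i\<in>I. d i = 0))"

definition tuples :: "nat \<Rightarrow> nat \<Rightarrow> 'a list list set" where
  "tuples n k = {vs. length vs = k \<and> (\<forall>v\<in>set vs. length v = n)}"

lemma length_lin_comb [simp]: "length (lin_comb n vs c) = n"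
  by (simp add: lin_comb_def)

lemma nth_lin_comb: "p < n \<Longrightarrow> lin_comb n vs c ! p = (\<Sum>i<length c. c!i * vs!i!p)"
  by (simp add: lin_comb_def)

lemma nth_lin_comb_Cons:
  "p < n \<Longrightarrow> lin_comb n (v#vs) (a#c) ! p = a * v!p + lin_comb n vs c ! p"
  by (simp only: nth_lin_comb length_Cons sum.lessThan_Suc_shift) simp

lemma lincomb_eq_lin_comb:
  assumes "length cs = length vs" "\<forall>v\<in>set vs. length v = n"
  shows "lincomb n vs cs = lin_comb n vs cs"
  using assms
proof (induction vs arbitrary: cs)
  case Nil
  then show ?case by (simp add: lincomb_def lin_comb_def map_replicate_const)
next
  case (Cons v vs)
  then obtain a c where cs: "cs = a # c" and IH: "lincomb n vs c = lin_comb n vs c"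
    by (cases cs) auto
  have "lincomb n (v#vs) (a#c) = vadd (map ((*) a) v) (lincomb n vs c)"
    by (simp add: lincomb_def)
  also have "\<dots> = lin_comb n (v#vs) (a#c)"
    using Cons.prems by (intro nth_equalityI) (auto simp: IH vadd_def nth_lin_comb_Cons)
  finally show ?case using cs by simp
qed

lemma lin_span_eq_image:
  assumes "\<forall>v\<in>set vs. length v = n"
  shows "lin_span n vs = lin_comb n vs ` {cs. length cs = length vs}"
proof -
  have "{lincomb n vs cs |cs. length cs = length vs} = {lin_comb n vs cs |cs. length cs = length vs}"
    using lincomb_eq_lin_comb[OF _ assms] by metis
  then show ?thesis unfolding lin_span_def by blast
qed

lemma lin_indep_iff_lin_indep_on:
  assumes "\<forall>v\<in>set vs. length v = n"
  shows "lin_indep n vs \<longleftrightarrow> lin_indep_on n {..<length vs} ((!) vs)"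
proof
  assume ind: "lin_indep n vs"
  show "lin_indep_on n {..<length vs} ((!) vs)"
    unfolding lin_indep_on_def
  proof (intro allI impI ballI)
    fix d i assume zero: "\<forall>p<n. (\<Sum>i\<in>{..<length vs}. d i * vs ! i ! p) = 0" and i: "i \<in> {..<length vs}"
    define cs where "cs = map d [0..<length vs]"
    have "lin_comb n vs cs = replicate n 0"
      using zero by (intro nth_equalityI) (simp_all add: nth_lin_comb cs_def)
    moreover have len: "length cs = length vs" by (simp add: cs_def)
    ultimately have "set cs \<subseteq> {0}"
      using ind lincomb_eq_lin_comb[OF len assms] unfolding lin_indep_def by metis
    moreover have "d i \<in> set cs" using i unfolding cs_def by simp
    ultimately show "d i = 0" by blast
  qed
next
  assume ind: "lin_indep_on n {..<length vs} ((!) vs)"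
  show "lin_indep n vs"
    unfolding lin_indep_def
  proof (intro allI impI)
    fix cs :: "'a list" assume cs: "length cs = length vs \<and> lincomb n vs cs = replicate n 0"
    then have "\<forall>p<n. (\<Sum>i\<in>{..<length vs}. cs ! i * vs ! i ! p) = 0"
      using lincomb_eq_lin_comb[OF _ assms, of cs] by (metis nth_lin_comb nth_replicate)
    then show "set cs \<subseteq> {0}"
      using ind cs unfolding lin_indep_on_def by (auto simp: in_set_conv_nth)
  qed
qed

lemma finite_lists_length [simp]: "finite {xs :: 'a::finite list. length xs = n}"
  using finite_lists_length_eq[of "UNIV::'a set" n] by simp

lemma card_lists_length [simp]: "card {xs :: 'a::finite list. length xs = n} = CARD('a) ^ n"
  using card_lists_length_eq[of "UNIV::'a set" n] by simp

lemma card_lin_span_le: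
  assumes "\<forall>v\<in>set vs. length v = n"
  shows "card (lin_span n (vs :: 'a::{finite,field} list list)) \<le> CARD('a) ^ length vs"
  unfolding lin_span_eq_image[OF assms]
  using card_image_le[of "{cs :: 'a list. length cs = length vs}" "lin_comb n vs"] by simp

lemma finite_lin_span [simp]:
  "\<forall>v\<in>set vs. length v = n \<Longrightarrow> finite (lin_span n (vs :: 'a::{finite,field} list list))"
  by (simp add: lin_span_eq_image)

lemma lin_indep_on_Cons:
  fixes y :: "'a::field list"
  assumes "\<forall>c\<in>set cs. length c = k" "length y = k"
    and ind: "lin_indep_on k {..<length cs} ((!) cs)"
    and notin: "y \<notin> lin_comb k cs ` {d. length d = length cs}"
  shows "lin_indep_on k {..<length (y#cs)} ((!) (y#cs))"
  unfolding lin_indep_on_def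
proof (intro allI impI)
  fix d assume zero: "\<forall>p<k. (\<Sum>i\<in>{..<length (y#cs)}. d i * (y#cs) ! i ! p) = 0"
  have zero': "d 0 * y!p + (\<Sum>i<length cs. d (Suc i) * cs!i!p) = 0" if "p < k" for p
    using zero that by (simp only: length_Cons sum.lessThan_Suc_shift) simp
  have d0: "d 0 = 0"
  proof (rule ccontr)
    assume "d 0 \<noteq> 0"
    then have "y ! p = (\<Sum>i<length cs. - d (Suc i) / d 0 * cs!i!p)" if "p < k" for p
    proof -
      have "(\<Sum>i<length cs. - d (Suc i) / d 0 * cs!i!p) = - (\<Sum>i<length cs. d (Suc i) * cs!i!p) / d 0"
        by (simp add: sum_divide_distrib sum_negf)
      also have "(\<Sum>i<length cs. d (Suc i) * cs!i!p) = - (d 0 * y!p)"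
        using zero'[OF that] by (simp add: eq_neg_iff_add_eq_0 add.commute)
      finally show ?thesis using \<open>d 0 \<noteq> 0\<close> by simp
    qed
    then have "y = lin_comb k cs (map (\<lambda>i. - d (Suc i) / d 0) [0..<length cs])"
      using assms(2) by (intro nth_equalityI) (auto simp: nth_lin_comb)
    with notin show False by auto
  qed
  then have "\<forall>i<length cs. d (Suc i) = 0"
    using ind zero' unfolding lin_indep_on_def by (elim allE[of _ "\<lambda>i. d (Suc i)"]) simp
  with d0 show "\<forall>i\<in>{..<length (y#cs)}. d i = 0"
    by (auto simp: less_Suc_eq_0_disj)
qed

lemma lin_indep_Cons:
  fixes v :: "'a::field list"
  assumes "\<forall>w\<in>set vs. length w = n" "length v = n" "lin_indep n vs" "v \<notin> lin_span n vs"
  shows "lin_indep n (v#vs)"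
  using assms lin_indep_on_Cons[of vs n v]
  by (simp add: lin_indep_iff_lin_indep_on lin_span_eq_image)

lemma exists_lin_indep_extension:
  fixes Y :: "'a::{finite,field} list set"
  assumes "Y \<subseteq> {v. length v = n}" "card Y > CARD('a) ^ length vs"
    and "set vs \<subseteq> Y" "lin_indep n vs"
  shows "\<exists>y\<in>Y. lin_indep n (y#vs)"
proof -
  have lens: "\<forall>v\<in>set vs. length v = n" using assms(1,3) by auto
  have "\<not> Y \<subseteq> lin_span n vs"
    using card_mono[of "lin_span n vs" Y] card_lin_span_le[OF lens] assms(2) lens by fastforce
  then show ?thesis
    using lin_indep_Cons[OF lens _ assms(4)] assms(1) by blast
qed

lemma exists_lin_indep_list:
  fixes Y :: "'a::{finite,field} list set"
  assumes "Y \<subseteq> {v. length v = n}" "card Y > CARD('a) ^ t"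
  shows "\<exists>vs. length vs = Suc t \<and> set vs \<subseteq> Y \<and> lin_indep n vs"
  using assms(2)
proof (induction t)
  case 0
  have "lin_indep n []" by (simp add: lin_indep_def)
  with 0 obtain y where "y \<in> Y" "lin_indep n [y]"
    using exists_lin_indep_extension[OF assms(1), of "[]"] by auto
  then show ?case by (intro exI[of _ "[y]"]) simp
next
  case (Suc t)
  have "CARD('a) ^ t < card Y"
    using Suc.prems le_less_trans[of "CARD('a) ^ t" "CARD('a) ^ Suc t"] by simp
  with Suc.IH obtain vs where vs: "length vs = Suc t" "set vs \<subseteq> Y" "lin_indep n vs"
    by blast
  with Suc.prems obtain y where "y \<in> Y" "lin_indep n (y#vs)"
    using exists_lin_indep_extension[OF assms(1), of vs] by auto
  with vs show ?case by (intro exI[of _ "y#vs"]) simp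
qed

lemma tuples_eq_lists: "tuples n k = {vs. set vs \<subseteq> {v. length v = n} \<and> length vs = k}"
  unfolding tuples_def by auto

lemma finite_tuples [simp]: "finite (tuples n k :: 'a::finite list list set)"
  unfolding tuples_eq_lists by (rule finite_lists_length_eq) simp

lemma card_tuples: "card (tuples n k :: 'a::finite list list set) = CARD('a) ^ (n * k)"
  unfolding tuples_eq_lists by (subst card_lists_length_eq) (simp_all add: power_mult)

lemma finite_indep_tuples [simp]: "finite (indep_tuples n k :: 'a::{finite,field} list list set)"
  by (rule finite_subset[OF _ finite_tuples[of n k]]) (auto simp: indep_tuples_def tuples_def)

lemma card_indep_tuples_Suc_ge:
  fixes q :: nat
  defines "q \<equiv> CARD('a::{finite,field})"
  shows "card (indep_tuples n i :: 'a list list set) * (q ^ n - q ^ i)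
           \<le> card (indep_tuples n (Suc i) :: 'a list list set)"
proof -
  let ?T = "indep_tuples n i :: 'a list list set"
  let ?S = "SIGMA vs:?T. {v. length v = n} - lin_span n vs"
  have lens: "\<forall>v\<in>set vs. length v = n" if "vs \<in> ?T" for vs
    using that by (simp add: indep_tuples_def)
  have "card ?T * (q ^ n - q ^ i) \<le> (\<Sum>vs\<in>?T. card ({v. length v = n} - lin_span n vs))"
  proof -
    have "q ^ n - q ^ i \<le> card ({v::'a list. length v = n} - lin_span n vs)" if "vs \<in> ?T" for vs
    proof -
      have "card (lin_span n vs) \<le> q ^ i"
        using card_lin_span_le[OF lens[OF that]] that by (simp add: q_def indep_tuples_def)
      moreover have "q ^ n - card (lin_span n vs) \<le> card ({v::'a list. length v = n} - lin_span n vs)"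
        using diff_card_le_card_Diff[of "lin_span n vs" "{v::'a list. length v = n}"] lens[OF that]
        by (simp add: q_def)
      ultimately show ?thesis by linarith
    qed
    then show ?thesis using sum_mono[of ?T "\<lambda>_. q ^ n - q ^ i"] by simp
  qed
  also have "\<dots> = card ?S" by (rule card_SigmaI[symmetric]) auto
  also have "\<dots> = card ((\<lambda>(vs, v). v # vs) ` ?S)" by (rule card_image[symmetric]) (auto simp: inj_on_def)
  also have "\<dots> \<le> card (indep_tuples n (Suc i) :: 'a list list set)"
    using lin_indep_Cons[OF lens] by (intro card_mono[OF finite_indep_tuples]) (auto simp: indep_tuples_def)
  finally show ?thesis .
qed

lemma card_indep_tuples_ge:
  fixes q :: real
  defines "q \<equiv> real CARD('a::{finite,field})"
  assumes "i \<le> n"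
  shows "real (card (indep_tuples n i :: 'a list list set)) \<ge> q ^ (n * i) * (1 - (\<Sum>j<i. q ^ j) / q ^ n)"
  using assms(2)
proof (induction i)
  case 0
  have "(indep_tuples n 0 :: 'a list list set) = {[]}" by (auto simp: indep_tuples_def lin_indep_def)
  then show ?case by simp
next
  case (Suc i)
  let ?a = "(\<Sum>j<i. q ^ j) / q ^ n" and ?b = "q ^ i / q ^ n"
  have q1: "q \<ge> 1" unfolding q_def by (simp add: Suc_leI)
  have le: "q ^ i \<le> q ^ n" using q1 Suc.prems by (simp add: power_increasing)
  have ab: "?a \<ge> 0" "?b \<ge> 0" using q1 by (simp_all add: sum_nonneg)
  have "q ^ (n * Suc i) * (1 - (\<Sum>j<Suc i. q ^ j) / q ^ n) = q ^ (n * i) * q ^ n * (1 - ?a - ?b)"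
    by (simp add: power_add add_divide_distrib algebra_simps)
  also have "\<dots> \<le> q ^ (n * i) * q ^ n * ((1 - ?a) * (1 - ?b))"
  proof (rule mult_left_mono)
    have "\<And>x y :: real. (1 - x) * (1 - y) = 1 - x - y + x * y" by (simp add: algebra_simps)
    then show "1 - ?a - ?b \<le> (1 - ?a) * (1 - ?b)"
      using mult_nonneg_nonneg[OF ab] by (simp only:)
  qed (use q1 in simp)
  also have "\<dots> = (q ^ (n * i) * (1 - ?a)) * (q ^ n - q ^ i)"
    using q1 by (simp add: field_simps)
  also have "\<dots> \<le> real (card (indep_tuples n i :: 'a list list set)) * (q ^ n - q ^ i)"
    using Suc le by (intro mult_right_mono) auto
  also have "\<dots> \<le> real (card (indep_tuples n (Suc i) :: 'a list list set))"
  proof -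
    have "CARD('a) ^ i \<le> CARD('a) ^ n" using Suc.prems by (simp add: power_increasing)
    then have "real (card (indep_tuples n i :: 'a list list set) * (CARD('a) ^ n - CARD('a) ^ i))
        = real (card (indep_tuples n i :: 'a list list set)) * (q ^ n - q ^ i)"
      by (simp add: q_def of_nat_diff)
    moreover have "real (card (indep_tuples n i :: 'a list list set) * (CARD('a) ^ n - CARD('a) ^ i))
        \<le> real (card (indep_tuples n (Suc i) :: 'a list list set))"
      using card_indep_tuples_Suc_ge[of n i, where 'a='a] by (simp only: of_nat_le_iff)
    ultimately show ?thesis by linarith
  qed
  finally show ?case .
qed

lemma card_indep_tuples_ge_half:
  fixes q :: real
  defines "q \<equiv> real CARD('a::{finite,field})"
  assumes q3: "q \<ge> 3" and kn: "k \<le> n"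
  shows "real (card (indep_tuples n k :: 'a list list set)) \<ge> q ^ (n * k) / 2"
proof -
  have "(\<Sum>j<k. q ^ j) = (q ^ k - 1) / (q - 1)" using q3 by (simp add: geometric_sum)
  also have "\<dots> \<le> (q ^ k - 1) / 2"
    using q3 by (intro divide_left_mono) (auto simp: one_le_power)
  also have "\<dots> \<le> q ^ n / 2"
  proof -
    have "q ^ k \<le> q ^ n" by (rule power_increasing[OF kn]) (use q3 in simp)
    then show ?thesis by simp
  qed
  finally have "(\<Sum>j<k. q ^ j) / q ^ n \<le> 1 / 2" using q3 by (simp add: divide_le_eq)
  then have "q ^ (n * k) / 2 \<le> q ^ (n * k) * (1 - (\<Sum>j<k. q ^ j) / q ^ n)"
    using q3 by (simp add: mult_left_mono[of "1/2", simplified])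
  also have "\<dots> \<le> real (card (indep_tuples n k :: 'a list list set))"
    using card_indep_tuples_ge[OF kn] by (simp add: q_def)
  finally show ?thesis .
qed

section \<open>Linear combinations of a random generator tuple\<close>

definition hitting_tuples ::
  "nat \<Rightarrow> nat \<Rightarrow> nat set \<Rightarrow> (nat \<Rightarrow> 'a::field list) \<Rightarrow> (nat \<Rightarrow> 'a list set) \<Rightarrow> 'a list list set" where
  "hitting_tuples n k I c B = {vs \<in> tuples n k. \<forall>i\<in>I. lin_comb n vs (c i) \<in> B i}"

lemma lin_indep_on_zero_dim:
  assumes "lin_indep_on 0 I c" shows "I = {}"
proof -
  have "\<forall>i\<in>I. (1::'a) = 0"
    using assms unfolding lin_indep_on_def by (elim allE[of _ "\<lambda>_. 1"]) simp
  then show ?thesis by auto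
qed

lemma lin_indep_on_tl:
  assumes "\<forall>i\<in>I. c i = 0 # c' i" "lin_indep_on (Suc k) I c"
  shows "lin_indep_on k I c'"
  unfolding lin_indep_on_def
proof (intro allI impI)
  fix d assume zero: "\<forall>p<k. (\<Sum>i\<in>I. d i * c' i ! p) = 0"
  have "(\<Sum>i\<in>I. d i * c i ! p) = 0" if "p < Suc k" for p
    using zero that assms(1) by (cases p) (simp_all add: sum.neutral)
  then show "\<forall>i\<in>I. d i = 0" using assms(2) unfolding lin_indep_on_def by blast
qed

lemma lin_indep_on_eliminate:
  assumes "finite I" "s \<in> I" "\<forall>i\<in>I. c i = a i # c' i" "a s \<noteq> 0"
    and "lin_indep_on (Suc k) I c"
  shows "lin_indep_on k (I - {s}) (\<lambda>i. map (\<lambda>j. c' i ! j - a i / a s * c' s ! j) [0..<k])"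
  unfolding lin_indep_on_def
proof (intro allI impI)
  fix d assume zero: "\<forall>p<k. (\<Sum>i\<in>I - {s}. d i * map (\<lambda>j. c' i ! j - a i / a s * c' s ! j) [0..<k] ! p) = 0"
  \<comment> \<open>the coefficient of the pivot vector compensates the eliminated first coordinates\<close>
  define D where "D i = (if i = s then - (\<Sum>j\<in>I - {s}. d j * a j / a s) else d i)" for i
  have split: "(\<Sum>i\<in>I. D i * f i) = D s * f s + (\<Sum>i\<in>I - {s}. d i * f i)" for f
    using assms(1,2) by (simp add: sum.remove D_def)
  have "(\<Sum>i\<in>I. D i * c i ! p) = 0" if "p < Suc k" for p
  proof (cases p)
    case 0
    then have "(\<Sum>i\<in>I. D i * c i ! p) = (\<Sum>i\<in>I. D i * a i)"
      using assms(3) by (intro sum.cong) auto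
    also have "\<dots> = D s * a s + (\<Sum>i\<in>I - {s}. d i * a i)" by (rule split)
    also have "\<dots> = 0" using assms(4) by (simp add: D_def sum_distrib_right)
    finally show ?thesis .
  next
    case (Suc p')
    then have p': "p' < k" using that by simp
    have "(\<Sum>i\<in>I - {s}. d i * c' i ! p') =
        (\<Sum>i\<in>I - {s}. d i * map (\<lambda>j. c' i ! j - a i / a s * c' s ! j) [0..<k] ! p')
        + (\<Sum>i\<in>I - {s}. d i * a i / a s) * c' s ! p'"
      using p' by (simp add: sum.distrib[symmetric] sum_distrib_right right_diff_distrib mult.assoc)
    also have "\<dots> = (\<Sum>i\<in>I - {s}. d i * a i / a s) * c' s ! p'"
      using zero p' by simp
    finally have rest: "(\<Sum>i\<in>I - {s}. d i * c' i ! p') = (\<Sum>i\<in>I - {s}. d i * a i / a s) * c' s ! p'" .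
    have "(\<Sum>i\<in>I. D i * c i ! p) = (\<Sum>i\<in>I. D i * c' i ! p')"
      using assms(3) Suc by (intro sum.cong) auto
    also have "\<dots> = D s * c' s ! p' + (\<Sum>i\<in>I - {s}. d i * c' i ! p')" by (rule split)
    also have "\<dots> = 0" by (simp add: D_def rest)
    finally show ?thesis .
  qed
  then have D0: "\<forall>i\<in>I. D i = 0" using assms(5) unfolding lin_indep_on_def by blast
  show "\<forall>i\<in>I - {s}. d i = 0"
  proof
    fix i assume "i \<in> I - {s}"
    then have "D i = 0" "i \<noteq> s" using D0 by auto
    then show "d i = 0" by (simp add: D_def)
  qed
qed

lemma lin_comb_Cons_zero: "lin_comb n (v # vs) (0 # c) = lin_comb n vs c"
  by (intro nth_equalityI) (simp_all add: nth_lin_comb_Cons)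

lemma lin_comb_eliminate:
  assumes "y \<noteq> 0" "length u = k" "length w = k"
  shows "lin_comb n (v # vs) (x # u) =
    vadd (map ((*) (x / y)) (lin_comb n (v # vs) (y # w)))
         (lin_comb n vs (map (\<lambda>j. u ! j - x / y * w ! j) [0..<k]))"
proof (rule nth_equalityI)
  fix p assume "p < length (lin_comb n (v # vs) (x # u))"
  then have p: "p < n" by simp
  have "(\<Sum>j<k. map (\<lambda>j. u ! j - x / y * w ! j) [0..<k] ! j * vs ! j ! p)
      = (\<Sum>j<k. u ! j * vs ! j ! p) - x / y * (\<Sum>j<k. w ! j * vs ! j ! p)"
    by (simp add: sum_subtractf sum_distrib_left left_diff_distrib mult.assoc)
  then show "lin_comb n (v # vs) (x # u) ! p = vadd (map ((*) (x / y)) (lin_comb n (v # vs) (y # w)))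
         (lin_comb n vs (map (\<lambda>j. u ! j - x / y * w ! j) [0..<k])) ! p"
    using assms p
    by (simp add: vadd_def nth_lin_comb_Cons) (simp add: nth_lin_comb field_simps)
qed (simp add: vadd_def)

lemma card_vadd_preimage_le:
  assumes "finite B" "length x = n"
  shows "card {y. length y = n \<and> vadd x y \<in> B} \<le> card (B :: 'a::field list set)"
proof (rule card_inj_on_le)
  show "inj_on (vadd x) {y. length y = n \<and> vadd x y \<in> B}"
  proof (intro inj_onI nth_equalityI)
    fix y z i assume y: "y \<in> {y. length y = n \<and> vadd x y \<in> B}" and z: "z \<in> {y. length y = n \<and> vadd x y \<in> B}"
      and eq: "vadd x y = vadd x z" and i: "i < length y"
    have "vadd x y ! i = vadd x z ! i" using eq by simp
    then show "y ! i = z ! i" using y z i assms(2) by (simp add: vadd_def)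
  qed (use assms(2) in auto)
qed (use assms in auto)

lemma card_hitting_tuples_Suc_zero_heads:
  fixes c c' :: "nat \<Rightarrow> 'a::{finite,field} list"
  assumes "\<forall>i\<in>I. c i = 0 # c' i"
  shows "card (hitting_tuples n (Suc k) I c B) =
    CARD('a) ^ n * card (hitting_tuples n k I c' B)"
proof -
  have "hitting_tuples n (Suc k) I c B =
      (\<lambda>(v, vs). v # vs) ` ({v. length v = n} \<times> hitting_tuples n k I c' B)"
  proof (intro equalityI subsetI)
    fix vs assume "vs \<in> hitting_tuples n (Suc k) I c B"
    then show "vs \<in> (\<lambda>(v, vs). v # vs) ` ({v. length v = n} \<times> hitting_tuples n k I c' B)"
      using assms by (cases vs) (auto simp: hitting_tuples_def tuples_def lin_comb_Cons_zero)
  qed (use assms in \<open>auto simp: hitting_tuples_def tuples_def lin_comb_Cons_zero\<close>)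
  moreover have "inj_on (\<lambda>(v, vs). v # vs) ({v. length v = n} \<times> hitting_tuples n k I c' B)"
    by (auto simp: inj_on_def)
  ultimately show ?thesis by (simp add: card_image card_cartesian_product)
qed

lemma card_hitting_tuples_Suc_pivot:
  fixes c c' :: "nat \<Rightarrow> 'a::{finite,field} list" and a :: "nat \<Rightarrow> 'a" and s k n :: nat
    and B :: "nat \<Rightarrow> 'a list set"
  defines "c'' \<equiv> \<lambda>i. map (\<lambda>j. c' i ! j - a i / a s * c' s ! j) [0..<k]"
    and "B'' \<equiv> \<lambda>b i. {y. length y = n \<and> vadd (map ((*) (a i / a s)) b) y \<in> B i}"
  assumes s: "s \<in> I" "a s \<noteq> 0" and c: "\<forall>i\<in>I. c i = a i # c' i \<and> length (c' i) = k"
    and B: "B s \<subseteq> {x. length x = n}"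
  shows "card (hitting_tuples n (Suc k) I c B) \<le>
    (\<Sum>b\<in>B s. card (hitting_tuples n k (I - {s}) c'' (B'' b)))"
proof -
  let ?f = "\<lambda>vs. (lin_comb n vs (c s), tl vs)"
  let ?H = "hitting_tuples n (Suc k) I c B"
  have fin: "finite (B s)" using finite_subset[OF B] by simp
  have cons: "\<exists>v vs'. vs = v # vs' \<and> length v = n \<and> vs' \<in> tuples n k" if "vs \<in> ?H" for vs
    using that by (cases vs) (auto simp: hitting_tuples_def tuples_def)
  have cs: "c s = a s # c' s" using s c by blast
  have "inj_on ?f ?H"
  proof (rule inj_onI)
    fix vs ws assume "vs \<in> ?H" "ws \<in> ?H" and eq: "?f vs = ?f ws"
    then obtain v vs' w ws' where vw: "vs = v # vs'" "ws = w # ws'" "length v = n" "length w = n"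
      using cons by blast
    have tl: "vs' = ws'" using eq vw by simp
    have "v ! p = w ! p" if "p < n" for p
    proof -
      have "lin_comb n vs (c s) ! p = lin_comb n ws (c s) ! p" using eq by simp
      then have "a s * v ! p + lin_comb n vs' (c' s) ! p = a s * w ! p + lin_comb n vs' (c' s) ! p"
        unfolding vw cs tl nth_lin_comb_Cons[OF that] .
      then show ?thesis using s(2) by simp
    qed
    then show "vs = ws" using vw tl by (simp add: nth_equalityI)
  qed
  moreover have "?f ` ?H \<subseteq> Sigma (B s) (\<lambda>b. hitting_tuples n k (I - {s}) c'' (B'' b))"
  proof clarify
    fix vs assume vs: "vs \<in> ?H"
    then obtain v vs' where vv: "vs = v # vs'" "length v = n" "vs' \<in> tuples n k"
      using cons by blast
    have "lin_comb n vs (c i) =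
        vadd (map ((*) (a i / a s)) (lin_comb n vs (c s))) (lin_comb n vs' (c'' i))" if "i \<in> I - {s}" for i
    proof -
      have ci: "c i = a i # c' i" "length (c' i) = k" and cs_len: "length (c' s) = k"
        using c that s(1) by auto
      show ?thesis
        unfolding vv(1) ci(1) cs c''_def by (rule lin_comb_eliminate[OF s(2) ci(2) cs_len])
    qed
    note elim = this
    have "lin_comb n vs' (c'' i) \<in> B'' (lin_comb n vs (c s)) i" if "i \<in> I - {s}" for i
    proof -
      have "lin_comb n vs (c i) \<in> B i" using vs that by (simp add: hitting_tuples_def)
      then show ?thesis using elim[OF that] by (simp add: B''_def)
    qed
    then show "lin_comb n vs (c s) \<in> B s \<and>
        tl vs \<in> hitting_tuples n k (I - {s}) c'' (B'' (lin_comb n vs (c s)))"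
      using vs vv s(1) by (simp add: hitting_tuples_def)
  qed
  moreover have fin_hit: "finite (hitting_tuples n k (I - {s}) c'' (B'' b))" for b
    by (rule finite_subset[OF _ finite_tuples[of n k]]) (auto simp: hitting_tuples_def)
  ultimately have "card ?H \<le> card (Sigma (B s) (\<lambda>b. hitting_tuples n k (I - {s}) c'' (B'' b)))"
    using fin by (intro card_inj_on_le) auto
  also have "\<dots> = (\<Sum>b\<in>B s. card (hitting_tuples n k (I - {s}) c'' (B'' b)))"
    using fin fin_hit by (intro card_SigmaI) auto
  finally show ?thesis .
qed

text \<open>In probabilistic terms: for linearly independent coefficient vectors c i, the
  combinations of a uniformly random generator tuple are independent and uniform.\<close>

lemma card_hitting_tuples:
  fixes c :: "nat \<Rightarrow> 'a::{finite,field} list"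
  assumes "finite I" "\<forall>i\<in>I. length (c i) = k" "lin_indep_on k I c"
    and "\<forall>i\<in>I. B i \<subseteq> {x. length x = n}"
  shows "card (hitting_tuples n k I c B) * CARD('a) ^ (n * card I)
           \<le> (\<Prod>i\<in>I. card (B i)) * CARD('a) ^ (n * k)"
  using assms
proof (induction k arbitrary: I c B)
  case 0
  then have "I = {}" using lin_indep_on_zero_dim by blast
  moreover have "card (hitting_tuples n 0 I c B) \<le> card (tuples n 0 :: 'a list list set)"
    by (rule card_mono[OF finite_tuples]) (auto simp: hitting_tuples_def)
  ultimately show ?case by (simp add: card_tuples)
next
  case (Suc k)
  let ?q = "CARD('a)"
  define a where "a i = hd (c i)" for i
  define c' where "c' i = tl (c i)" for i
  have c: "\<forall>i\<in>I. c i = a i # c' i \<and> length (c' i) = k"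
  proof
    fix i assume "i \<in> I"
    then have "length (c i) = Suc k" using Suc.prems(2) by blast
    then show "c i = a i # c' i \<and> length (c' i) = k"
      unfolding a_def c'_def by (cases "c i") auto
  qed
  show ?case
  proof (cases "\<forall>i\<in>I. a i = 0")
    case True
    then have heads: "\<forall>i\<in>I. c i = 0 # c' i" using c by simp
    have lens: "\<forall>i\<in>I. length (c' i) = k" using c by blast
    have "card (hitting_tuples n k I c' B) * ?q ^ (n * card I) \<le> (\<Prod>i\<in>I. card (B i)) * ?q ^ (n * k)"
      using Suc.IH[OF Suc.prems(1) lens lin_indep_on_tl[OF heads Suc.prems(3)] Suc.prems(4)] .
    then show ?thesis
      unfolding card_hitting_tuples_Suc_zero_heads[OF heads] by (simp add: power_add mult.left_commute)
  next
    case False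
    then obtain s where s: "s \<in> I" "a s \<noteq> 0" by auto
    define c'' where "c'' i = map (\<lambda>j. c' i ! j - a i / a s * c' s ! j) [0..<k]" for i
    define B'' where "B'' b i = {y. length y = n \<and> vadd (map ((*) (a i / a s)) b) y \<in> B i}" for b i
    have IH: "card (hitting_tuples n k (I - {s}) c'' (B'' b)) * ?q ^ (n * card (I - {s}))
        \<le> (\<Prod>i\<in>I - {s}. card (B i)) * ?q ^ (n * k)" if "b \<in> B s" for b
    proof -
      have ind: "lin_indep_on k (I - {s}) c''"
        unfolding c''_def using Suc.prems(1,3) s c by (intro lin_indep_on_eliminate) auto
      have lens: "\<forall>i\<in>I - {s}. length (c'' i) = k" by (simp add: c''_def)
      have sub: "\<forall>i\<in>I - {s}. B'' b i \<subseteq> {x. length x = n}" by (auto simp: B''_def)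
      have "card (hitting_tuples n k (I - {s}) c'' (B'' b)) * ?q ^ (n * card (I - {s}))
          \<le> (\<Prod>i\<in>I - {s}. card (B'' b i)) * ?q ^ (n * k)"
        using Suc.IH[OF _ lens ind sub] Suc.prems(1) by blast
      also have "\<dots> \<le> (\<Prod>i\<in>I - {s}. card (B i)) * ?q ^ (n * k)"
      proof -
        have "length b = n" using that s(1) Suc.prems(4) by auto
        moreover have "finite (B i)" if "i \<in> I - {s}" for i
        proof (rule finite_subset)
          show "B i \<subseteq> {x. length x = n}" using Suc.prems(4) that by blast
        qed simp
        ultimately have "card (B'' b i) \<le> card (B i)" if "i \<in> I - {s}" for i
          unfolding B''_def using that by (intro card_vadd_preimage_le) auto
        then show ?thesis by (intro mult_right_mono prod_mono) auto
      qed
      finally show ?thesis .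
    qed
    let ?P = "\<Prod>i\<in>I - {s}. card (B i)"
    have card_I: "card I = Suc (card (I - {s}))" using Suc.prems(1) s(1) card_Suc_Diff1 by metis
    have "card (hitting_tuples n (Suc k) I c B) \<le> (\<Sum>b\<in>B s. card (hitting_tuples n k (I - {s}) c'' (B'' b)))"
      using card_hitting_tuples_Suc_pivot[OF s c] Suc.prems(4) s(1)
      unfolding c''_def B''_def by simp
    then have "card (hitting_tuples n (Suc k) I c B) * ?q ^ (n * card I)
        \<le> (\<Sum>b\<in>B s. card (hitting_tuples n k (I - {s}) c'' (B'' b))) * ?q ^ (n * card I)"
      by (rule mult_right_mono) simp
    also have "\<dots> = (\<Sum>b\<in>B s. card (hitting_tuples n k (I - {s}) c'' (B'' b)) * ?q ^ (n * card (I - {s}))) * ?q ^ n"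
      unfolding card_I mult_Suc_right power_add sum_distrib_right by (simp only: mult_ac)
    also have "\<dots> \<le> (\<Sum>b\<in>B s. ?P * ?q ^ (n * k)) * ?q ^ n"
      using IH by (intro mult_right_mono sum_mono) auto
    also have "\<dots> = (card (B s) * ?P) * ?q ^ (n * Suc k)"
      by (simp only: sum_constant of_nat_id mult_Suc_right power_add mult_ac)
    also have "card (B s) * ?P = (\<Prod>i\<in>I. card (B i))"
      using prod.remove[OF Suc.prems(1) s(1), of "\<lambda>i. card (B i)"] by simp
    finally show ?thesis .
  qed
qed

section \<open>Insertion-deletion distance and subsequences\<close>

lemma relpowp_insdel_step_length_add: "(insdel_step ^^ (length a + length b)) a b"
proof -
  have del: "(insdel_step ^^ length a) a []"
  proof (induction a)
    case (Cons x a)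
    have "insdel_step (x # a) a" unfolding insdel_step_def by (metis append_Nil)
    then show ?case using Cons relpowp_Suc_I2 by (metis length_Cons)
  qed simp
  have ins: "(insdel_step ^^ length b) [] b"
  proof (induction b)
    case (Cons x b)
    have "insdel_step b (x # b)" unfolding insdel_step_def by (metis append_Nil)
    then show ?case using Cons relpowp_Suc_I by (metis length_Cons)
  qed simp
  show ?thesis unfolding relpowp_add using del ins by (auto intro!: relcomppI)
qed

lemma relpowp_insdel_dist: "(insdel_step ^^ insdel_dist a b) a b"
  unfolding insdel_dist_def using relpowp_insdel_step_length_add by (rule LeastI)

lemma subseq_delete:
  assumes "subseq s (xs @ x # ys)"
  obtains s' where "subseq s' s" "subseq s' (xs @ ys)" "length s \<le> Suc (length s')"
proof -
  obtain s1 s2 where s: "s = s1 @ s2" "subseq s1 xs" "subseq s2 (x # ys)"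
    using assms by (rule subseq_appendE)
  obtain s3 where s3: "subseq s3 s2" "subseq s3 ys" "length s2 \<le> Suc (length s3)"
  proof (cases "subseq s2 ys")
    case True
    then show ?thesis using that[of s2] by simp
  next
    case False
    then obtain s3 where "s2 = x # s3" "subseq s3 ys" using s(3) by (cases s2) (auto split: if_splits)
    moreover have "subseq s3 (x # s3)" by (rule list_emb_Cons[OF subseq_order.order_refl])
    ultimately show ?thesis using that[of s3] by simp
  qed
  show ?thesis
    using s s3 by (intro that[of "s1 @ s3"]) (auto intro: list_emb_append_mono)
qed

lemma relpowp_insdel_step_common_subseq:
  "(insdel_step ^^ k) a b \<Longrightarrow> \<exists>s. subseq s a \<and> subseq s b \<and> length a + length b \<le> k + 2 * length s"
proof (induction k arbitrary: b)
  case 0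
  then have "a = b" by simp
  then show ?case by (intro exI[of _ a]) (simp add: subseq_order.order_refl)
next
  case (Suc k)
  from Suc.prems obtain y where y: "(insdel_step ^^ k) a y" "insdel_step y b" by (rule relpowp_Suc_E)
  obtain s where s: "subseq s a" "subseq s y" "length a + length y \<le> k + 2 * length s"
    using Suc.IH[OF y(1)] by blast
  from y(2) show ?case unfolding insdel_step_def
  proof (elim disjE exE conjE)
    fix xs ys x assume b: "b = xs @ x # ys" and yy: "y = xs @ ys"
    have "subseq y b" using b yy by (simp add: subseq_append' list_emb_Cons)
    then have "subseq s b" using subseq_order.trans[OF s(2)] by simp
    moreover have "length b = Suc (length y)" using b yy by simp
    ultimately show ?thesis using s by (intro exI[of _ s]) simp
  next
    fix xs ys x assume yy: "y = xs @ x # ys" and b: "b = xs @ ys"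
    obtain s' where s': "subseq s' s" "subseq s' b" "length s \<le> Suc (length s')"
      using subseq_delete[of s xs x ys] s(2) yy b by blast
    have "subseq s' a" using subseq_order.trans[OF s'(1) s(1)] .
    moreover have "length y = Suc (length b)" using b yy by simp
    ultimately show ?thesis using s s' by (intro exI[of _ s']) simp
  qed
qed

lemma insdel_dist_common_subseq:
  "\<exists>s. subseq s a \<and> subseq s b \<and> length a + length b \<le> insdel_dist a b + 2 * length s"
  by (rule relpowp_insdel_step_common_subseq[OF relpowp_insdel_dist])

lemma card_subseqs_le: "card {s :: 'a::finite list. subseq s r \<and> length s = l} \<le> length r choose l"
proof (induction r arbitrary: l)
  case Nil
  have "{s :: 'a list. subseq s [] \<and> length s = l} \<subseteq> {[]}" by auto
  then have "card {s :: 'a list. subseq s [] \<and> length s = l} \<le> card {[]::'a list}" by (intro card_mono) auto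
  then show ?case by (cases l) auto
next
  case (Cons x r)
  show ?case
  proof (cases l)
    case 0
    have "{s :: 'a list. subseq s (x#r) \<and> length s = l} \<subseteq> {[]}" using 0 by auto
    then have "card {s :: 'a list. subseq s (x#r) \<and> length s = l} \<le> card {[]::'a list}" by (intro card_mono) auto
    then show ?thesis using 0 by simp
  next
    case (Suc l')
    have sub: "{s :: 'a list. subseq s (x#r) \<and> length s = l} \<subseteq>
      (Cons x) ` {s. subseq s r \<and> length s = l'} \<union> {s. subseq s r \<and> length s = l}"
    proof
      fix s assume h: "s \<in> {s :: 'a list. subseq s (x#r) \<and> length s = l}"
      then obtain y s0 where s: "s = y # s0" using Suc by (cases s) auto
      show "s \<in> (Cons x) ` {s. subseq s r \<and> length s = l'} \<union> {s. subseq s r \<and> length s = l}"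
      proof (cases "y = x")
        case True then show ?thesis using h s Suc by auto
      next
        case False then show ?thesis using h s by auto
      qed
    qed
    have "card {s :: 'a list. subseq s (x#r) \<and> length s = l} \<le>
       card ((Cons x) ` {s. subseq s r \<and> length s = l'} \<union> {s. subseq s r \<and> length s = l})"
      by (rule card_mono[OF _ sub]) simp
    also have "\<dots> \<le> card ((Cons x) ` {s. subseq s r \<and> length s = l'}) + card {s. subseq s r \<and> length s = l}"
      by (rule card_Un_le)
    also have "\<dots> \<le> card {s. subseq s r \<and> length s = l'} + card {s. subseq s r \<and> length s = l}"
      using card_image_le by (simp add: card_image_le)
    also have "\<dots> \<le> (length r choose l') + (length r choose l)" using Cons.IH by (intro add_mono) auto
    also have "\<dots> = length (x#r) choose l" using Suc by simp
    finally show ?thesis .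
  qed
qed

lemma card_supseqs_Cons_le:
  "card {c :: 'a::finite list. length c = Suc n \<and> subseq (y # s) c}
     \<le> card {c. length c = n \<and> subseq s c} + (CARD('a) - 1) * card {c. length c = n \<and> subseq (y # s) c}"
proof -
  let ?A = "\<lambda>t. {c :: 'a list. length c = n \<and> subseq t c}"
  have "{c. length c = Suc n \<and> subseq (y # s) c} \<subseteq> Cons y ` ?A s \<union> (\<Union>x\<in>UNIV - {y}. Cons x ` ?A (y # s))"
  proof
    fix c assume "c \<in> {c. length c = Suc n \<and> subseq (y # s) c}"
    then show "c \<in> Cons y ` ?A s \<union> (\<Union>x\<in>UNIV - {y}. Cons x ` ?A (y # s))"
      by (cases c) (auto split: if_splits)
  qed
  then have "card {c. length c = Suc n \<and> subseq (y # s) c}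
      \<le> card (Cons y ` ?A s \<union> (\<Union>x\<in>UNIV - {y}. Cons x ` ?A (y # s)))"
    by (rule card_mono[rotated]) simp
  also have "\<dots> \<le> card (Cons y ` ?A s) + card (\<Union>x\<in>UNIV - {y}. Cons x ` ?A (y # s))"
    by (rule card_Un_le)
  also have "\<dots> \<le> card (?A s) + (\<Sum>x\<in>UNIV - {y}. card (Cons x ` ?A (y # s)))"
    by (intro add_mono card_image_le card_UN_le) auto
  also have "\<dots> \<le> card (?A s) + (\<Sum>x\<in>UNIV - {y}. card (?A (y # s)))"
    by (intro add_mono sum_mono card_image_le) auto
  also have "\<dots> = card (?A s) + (CARD('a) - 1) * card (?A (y # s))"
    by (simp add: card_Diff_subset)
  finally show ?thesis .
qed

lemma card_supseqs_le:
  fixes p :: real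
  defines "q \<equiv> real CARD('a::finite)" and "r \<equiv> (real CARD('a) - 1) * (1 - p) / p"
  assumes p: "0 < p" "p < 1" "p * q \<le> q - 1" and "length (s :: 'a list) \<le> n"
  shows "real (card {c. length c = n \<and> subseq s c}) \<le> r ^ (n - length s) / (1 - p) ^ n"
  using assms(5)
proof (induction n arbitrary: s)
  case 0
  have "{c :: 'a list. length c = 0 \<and> subseq s c} \<subseteq> {[]}" by auto
  then have "card {c :: 'a list. length c = 0 \<and> subseq s c} \<le> card {[] :: 'a list}"
    by (rule card_mono[rotated]) simp
  then show ?case by simp
next
  case (Suc n)
  have q1: "q \<ge> 1" unfolding q_def by (simp add: Suc_leI)
  have r_div: "r / (1 - p) = (q - 1) / p" and r_add: "r + (q - 1) = r / (1 - p)"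
    using p unfolding r_def q_def by (simp_all add: field_simps)
  show ?case
  proof (cases s)
    case Nil
    then have "real (card {c :: 'a list. length c = Suc n \<and> subseq s c}) = q ^ Suc n"
      by (simp add: q_def)
    also have "\<dots> \<le> ((q - 1) / p) ^ Suc n"
      using p q1 by (intro power_mono) (simp_all add: field_simps)
    finally show ?thesis using Nil by (simp add: r_div[symmetric] power_divide)
  next
    case (Cons y s')
    let ?A = "\<lambda>t. real (card {c :: 'a list. length c = n \<and> subseq t c})"
    have "real (CARD('a) - 1) = q - 1"
      unfolding q_def by (simp add: of_nat_diff Suc_leI)
    moreover have "real (card {c. length c = Suc n \<and> subseq s c})
        \<le> real (card {c :: 'a list. length c = n \<and> subseq s' c}
             + (CARD('a) - 1) * card {c :: 'a list. length c = n \<and> subseq s c})"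
      unfolding of_nat_le_iff Cons by (rule card_supseqs_Cons_le)
    ultimately have rec: "real (card {c. length c = Suc n \<and> subseq s c}) \<le> ?A s' + (q - 1) * ?A s"
      by simp
    have IH': "?A s' \<le> r ^ (n - length s') / (1 - p) ^ n" using Suc p Cons by simp
    show ?thesis
    proof (cases "length s \<le> n")
      case True
      have "?A s \<le> r ^ (n - length s) / (1 - p) ^ n" using Suc.IH[of s] True p by simp
      moreover have "n - length s' = Suc (n - length s)" using True Cons by simp
      ultimately have "?A s' + (q - 1) * ?A s \<le> r ^ Suc (n - length s) / (1 - p) ^ n + (q - 1) * (r ^ (n - length s) / (1 - p) ^ n)"
        using IH' q1 by (intro add_mono mult_left_mono) auto
      also have "\<dots> = r ^ (n - length s) / (1 - p) ^ n * (r + (q - 1))"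
        by (simp add: algebra_simps add_divide_distrib diff_divide_distrib)
      also have "\<dots> = r ^ (Suc n - length s) / (1 - p) ^ Suc n"
        using True by (simp add: r_add Suc_diff_le mult.commute)
      finally show ?thesis using rec by linarith
    next
      case False
      then have "(q - 1) * ?A s = 0" by (auto dest: list_emb_length)
      moreover have "n - length s' = 0" "Suc n - length s = 0" using False Suc.prems Cons by auto
      moreover have "1 / (1 - p) ^ n \<le> 1 / (1 - p) ^ Suc n"
        using p by (intro divide_left_mono mult_pos_pos) (auto simp: power_decreasing)
      ultimately show ?thesis using rec IH' by (simp del: mult_eq_0_iff)
    qed
  qed
qed

section \<open>Entropy estimates and insdel balls\<close>

text \<open>The part of the objective that accounts for the choice of a common subsequence inside the
  received word; the remaining term Hq q k accounts for its supersequences of length n.\<close>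

definition subseq_rate :: "real \<Rightarrow> real \<Rightarrow> real \<Rightarrow> real" where
  "subseq_rate q g k = (2*g - k + 1) * Hq q (g / (2*g - k + 1)) - g * log q (q - 1)"

lemma insdel_obj_eq: "insdel_obj q g k = subseq_rate q g k + Hq q k"
  by (simp add: insdel_obj_def subseq_rate_def)

lemma choose_le_exp_ln:
  fixes x :: real
  assumes x: "0 < x" "x < 1" and j: "j \<le> m"
  shows "real (m choose j) \<le> exp (- real j * ln x - real (m - j) * ln (1 - x))"
proof -
  have "1 = (x + (1 - x))^m" by simp
  also have "\<dots> = (\<Sum>k\<le>m. real (m choose k) * x^k * (1-x)^(m-k))" by (rule binomial_ring)
  finally have s: "(\<Sum>k\<le>m. real (m choose k) * x^k * (1-x)^(m-k)) = 1" by simp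
  have "real (m choose j) * x^j * (1-x)^(m-j) \<le> (\<Sum>k\<le>m. real (m choose k) * x^k * (1-x)^(m-k))"
    by (rule member_le_sum) (use x j in auto)
  then have le: "real (m choose j) * (x^j * (1-x)^(m-j)) \<le> 1" using s by (simp add: mult.assoc)
  have pos: "x^j * (1-x)^(m-j) > 0" using x by simp
  have "x^j * (1-x)^(m-j) = exp (real j * ln x + real (m - j) * ln (1 - x))"
    using x by (simp add: exp_add ln_realpow[symmetric])
  then have "real (m choose j) \<le> 1 / exp (real j * ln x + real (m - j) * ln (1 - x))"
    using le pos by (simp add: field_simps)
  also have "\<dots> = exp (- (real j * ln x + real (m - j) * ln (1 - x)))"
    by (subst exp_minus) (simp add: divide_inverse)
  also have "- (real j * ln x + real (m - j) * ln (1 - x)) = - real j * ln x - real (m - j) * ln (1 - x)"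
    by simp
  finally show ?thesis .
qed

lemma scaled_Hq_eq:
  fixes q g D :: real
  assumes "q > 1" "0 < g" "g < D"
  shows "D * Hq q (g / D) - g * log q (q - 1) = (- g * ln (g / D) - (D - g) * ln (1 - g / D)) / ln q"
proof -
  have x: "0 < g / D" "g / D < 1" using assms by auto
  have "D * Hq q (g / D) = g * log q (q - 1) - g * log q (g / D) - (D - g) * log q (1 - g / D)"
    using x assms unfolding Hq_def by (simp add: algebra_simps)
  then show ?thesis by (simp add: log_def diff_divide_distrib)
qed

lemma choose_le_exp_subseq_rate:
  fixes q g k :: real
  assumes q: "q > 1" and k: "0 \<le> k" "k < 1" and g: "g \<ge> 0" and "j \<le> m"
    and jn: "real j \<le> g * real n" and mj: "real (m - j) \<le> (1 - k) * real n"
  shows "real (m choose j) \<le> exp (real n * subseq_rate q g k * ln q)"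
proof (cases "g = 0")
  case True
  then have "j = 0" using jn by simp
  then show ?thesis using True by (simp add: subseq_rate_def Hq_def)
next
  case False
  define D where "D = 2*g - k + 1"
  define x where "x = g / D"
  have "(1 - k) * real n \<le> (D - g) * real n" unfolding D_def using g by (simp add: mult_right_mono)
  then have D: "0 < g" "g < D" "real (m - j) \<le> (D - g) * real n"
    using False g k mj unfolding D_def by auto
  then have x: "0 < x" "x < 1" and ln_neg: "ln x < 0" "ln (1 - x) < 0" unfolding x_def by auto
  have "real (m choose j) \<le> exp (- real j * ln x - real (m - j) * ln (1 - x))"
    by (rule choose_le_exp_ln[OF x \<open>j \<le> m\<close>])
  also have "\<dots> \<le> exp (real n * (- g * ln x - (D - g) * ln (1 - x)))"
  proof -
    have "- real j * ln x \<le> - (g * real n) * ln x"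
      using jn ln_neg by (intro mult_right_mono_neg) auto
    moreover have "- real (m - j) * ln (1 - x) \<le> - ((D - g) * real n) * ln (1 - x)"
      using D(3) ln_neg by (intro mult_right_mono_neg) auto
    ultimately show ?thesis by (simp add: algebra_simps)
  qed
  also have "\<dots> = exp (real n * (D * Hq q x - g * log q (q - 1)) * ln q)"
    unfolding x_def scaled_Hq_eq[OF q D(1,2)] using q by simp
  finally show ?thesis unfolding subseq_rate_def D_def x_def .
qed

lemma supseq_bound_eq_exp_Hq:
  fixes q k :: real
  assumes q: "q > 2" and k: "0 < k" "k < 1" and i0: "real i0 = k * real n"
  shows "((q - 1) * (1 - k) / k)^i0 / (1 - k)^n = exp (real n * Hq q k * ln q)"
proof -
  have lq: "ln q > 0" using q by simp
  have pos: "((q - 1) * (1 - k) / k)^i0 / (1 - k)^n > 0" using q k by simp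
  have "ln (((q - 1) * (1 - k) / k)^i0 / (1 - k)^n) = real i0 * (ln (q - 1) + ln (1 - k) - ln k) - real n * ln (1 - k)"
    using q k by (simp add: ln_div ln_mult ln_realpow)
  also have "\<dots> = real n * (k * ln (q - 1) - k * ln k - (1 - k) * ln (1 - k))"
    unfolding i0 by (simp add: algebra_simps)
  also have "\<dots> = real n * Hq q k * ln q"
    unfolding Hq_def log_def using k lq by (simp add: field_simps)
  finally show ?thesis using pos by (metis exp_ln)
qed

lemma subseq_rate_nonneg:
  assumes "q > 1" "0 \<le> k" "k < 1" "g \<ge> 0"
  shows "subseq_rate q g k \<ge> 0"
proof -
  have "real (0 choose 0) \<le> exp (real 1 * subseq_rate q g k * ln q)"
    using assms by (intro choose_le_exp_subseq_rate) auto
  then have "0 \<le> subseq_rate q g k * ln q" by simp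
  with assms(1) show ?thesis by (simp add: zero_le_mult_iff)
qed

lemma Hq_nonneg:
  assumes "q \<ge> 2" "0 \<le> k" "k < 1"
  shows "Hq q k \<ge> 0"
proof (cases "k = 0")
  case False
  then have "k * log q (q - 1) \<ge> 0" "k * log q k \<le> 0" "(1 - k) * log q (1 - k) \<le> 0"
    using assms by (simp_all add: mult_nonneg_nonpos)
  then show ?thesis unfolding Hq_def by simp
qed (simp add: Hq_def)

lemma insdel_obj_nonneg:
  assumes "q \<ge> 3" "0 \<le> g" "0 \<le> k" "k < (q - 1) / q"
  shows "insdel_obj q g k \<ge> 0"
proof -
  have "(q - 1) / q < 1" using assms(1) by simp
  then have "k < 1" using assms(4) by linarith
  then show ?thesis
    using subseq_rate_nonneg[of q k g] Hq_nonneg[of q k] assms by (simp add: insdel_obj_eq)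
qed

lemma Hq_interior:
  "0 < x \<Longrightarrow> x < 1 \<Longrightarrow> Hq q x = x * log q (q - 1) - x * log q x - (1 - x) * log q (1 - x)"
  by (simp add: Hq_def)

lemma Hq_at_max:
  assumes "q > 2"
  shows "Hq q ((q - 1) / q) = 1"
proof -
  have a: "log q ((q - 1) / q) = log q (q - 1) - 1" and b: "1 - (q - 1) / q = 1 / q"
    and c: "log q (1 / q) = - 1"
    using assms by (simp_all add: log_divide field_simps)
  have "(q - 1) / q \<noteq> 0" "(q - 1) / q \<noteq> 1" using assms by auto
  then have "Hq q ((q - 1) / q) = (q - 1) / q * log q (q - 1) - (q - 1) / q * log q ((q - 1) / q)
      - (1 - (q - 1) / q) * log q (1 - (q - 1) / q)"
    by (simp add: Hq_def)
  also have "\<dots> = 1" unfolding a b c using assms by (simp add: field_simps)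
  finally show ?thesis .
qed

lemma Hq_tendsto_at_max:
  assumes "q > 2"
  shows "(Hq q \<longlongrightarrow> 1) (at_left ((q - 1) / q))"
proof -
  define f where "f k = k * log q (q - 1) - k * log q k - (1 - k) * log q (1 - k)" for k
  have k0: "0 < (q - 1) / q" "(q - 1) / q < 1" using assms by auto
  have "(f \<longlongrightarrow> f ((q - 1) / q)) (at_left ((q - 1) / q))"
    unfolding f_def using k0 assms by (intro tendsto_intros) auto
  moreover have "f ((q - 1) / q) = 1"
    using Hq_at_max[OF assms] Hq_interior[OF k0] by (simp add: f_def)
  moreover have "eventually (\<lambda>k. f k = Hq q k) (at_left ((q - 1) / q))"
    using eventually_at_left_real[OF k0(1)] by eventually_elim (use k0 in \<open>auto simp: Hq_interior f_def\<close>)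
  ultimately show ?thesis using tendsto_cong by force
qed

text \<open>For tau \<ge> (q - 1)/q the rate 1 - M - eps is negative, so only the zero code remains.\<close>

lemma insdel_obj_bound_ge_1:
  fixes q tau M :: real
  assumes q: "q \<ge> 3" and tau: "(q - 1) / q \<le> tau" "tau < q - 1 + (q - 1) / q"
    and bound: "\<And>g k. 0 \<le> g \<Longrightarrow> g < q - 1 \<Longrightarrow> 0 \<le> k \<Longrightarrow> k < (q - 1) / q \<Longrightarrow> g + k = tau \<Longrightarrow>
                  insdel_obj q g k \<le> M"
  shows "M \<ge> 1"
proof (rule ccontr)
  assume "\<not> M \<ge> 1"
  then have "eventually (\<lambda>k. M < Hq q k) (at_left ((q - 1) / q))"
    using order_tendstoD(1)[OF Hq_tendsto_at_max] q by simp
  moreover have "eventually (\<lambda>k. k \<in> {max 0 (tau - (q - 1))<..<(q - 1) / q}) (at_left ((q - 1) / q))"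
    using q tau by (intro eventually_at_left_real) auto
  ultimately obtain k where k: "M < Hq q k" "max 0 (tau - (q - 1)) < k" "k < (q - 1) / q"
    using eventually_happens'[OF trivial_limit_at_left_real eventually_conj] by fastforce
  then have "k < 1" using q by (smt (verit) divide_less_eq_1)
  have "Hq q k \<le> insdel_obj q (tau - k) k"
    using subseq_rate_nonneg[of q k "tau - k"] q tau k \<open>k < 1\<close> by (simp add: insdel_obj_eq)
  also have "\<dots> \<le> M" using bound[of "tau - k" k] k tau by simp
  finally show False using k(1) by simp
qed

lemma insdel_ball_subset_supseqs:
  "{c. length c = n \<and> real (insdel_dist r c) \<le> z} \<subseteq>
   (\<Union>l\<in>{l. l \<le> n \<and> l \<le> length r \<and> real (length r + n) \<le> z + 2 * real l}.
      \<Union>s\<in>{s. subseq s r \<and> length s = l}. {c. length c = n \<and> subseq s c})"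
proof
  fix c assume c: "c \<in> {c. length c = n \<and> real (insdel_dist r c) \<le> z}"
  obtain s where s: "subseq s r" "subseq s c" "length r + length c \<le> insdel_dist r c + 2 * length s"
    using insdel_dist_common_subseq by blast
  then have "length s \<le> n" "length s \<le> length r" using c list_emb_length by fastforce+
  moreover have "real (length r + n) \<le> z + 2 * real (length s)"
    using s(3) c by (simp flip: of_nat_add of_nat_le_iff)
  ultimately show "c \<in> (\<Union>l\<in>{l. l \<le> n \<and> l \<le> length r \<and> real (length r + n) \<le> z + 2 * real l}.
      \<Union>s\<in>{s. subseq s r \<and> length s = l}. {c. length c = n \<and> subseq s c})"
    using s c by blast
qed

lemma card_supseqs_le_exp_Hq:
  fixes s :: "'a::finite list" and n :: nat
  defines "q \<equiv> real CARD('a)" and "k \<equiv> real (n - length s) / real n"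
  assumes "q \<ge> 3" "s \<noteq> []" "length s \<le> n" "k \<le> (q - 1) / q"
  shows "real (card {c. length c = n \<and> subseq s c}) \<le> exp (real n * Hq q k * ln q)"
proof (cases "length s = n")
  case True
  then have "{c. length c = n \<and> subseq s c} \<subseteq> {s}" using subseq_same_length by blast
  then have "card {c. length c = n \<and> subseq s c} \<le> 1" using card_mono[of "{s}"] by fastforce
  then show ?thesis using True by (simp add: k_def Hq_def)
next
  case False
  then have k: "0 < k" "k < 1" and nk: "real (n - length s) = k * real n"
    using assms(4,5) by (auto simp: k_def)
  have "real (card {c. length c = n \<and> subseq s c}) \<le> ((q - 1) * (1 - k) / k) ^ (n - length s) / (1 - k) ^ n"
    using card_supseqs_le[of k s n] k assms(3,5,6) by (simp add: q_def field_simps)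
  also have "\<dots> = exp (real n * Hq q k * ln q)"
    using supseq_bound_eq_exp_Hq[OF _ k nk] assms(3) by simp
  finally show ?thesis .
qed

lemma card_supseqs_of_subseqs_le:
  fixes r :: "'a::finite list" and n l :: nat and g :: real
  defines "q \<equiv> real CARD('a)" and "k \<equiv> real (n - l) / real n"
  assumes q: "q \<ge> 3" and l: "1 \<le> l" "l \<le> n" "l \<le> length r" and k: "k \<le> (q - 1) / q"
    and g: "g \<ge> 0" "real (length r - l) \<le> g * real n"
  shows "real (card (\<Union>s\<in>{s. subseq s r \<and> length s = l}. {c. length c = n \<and> subseq s c}))
           \<le> exp (real n * insdel_obj q g k * ln q)"
proof -
  let ?S = "{s. subseq s r \<and> length s = l}"
  have k01: "0 \<le> k" "k < 1" "real (length r - (length r - l)) \<le> (1 - k) * real n"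
    using l by (auto simp: k_def field_simps)
  have "finite ?S" by (rule finite_subset[OF _ finite_lists_length[of l]]) auto
  then have "real (card (\<Union>s\<in>?S. {c. length c = n \<and> subseq s c})) \<le> (\<Sum>s\<in>?S. real (card {c. length c = n \<and> subseq s c}))"
    unfolding of_nat_sum[symmetric] of_nat_le_iff by (rule card_UN_le)
  also have "\<dots> \<le> (\<Sum>s\<in>?S. exp (real n * Hq q k * ln q))"
  proof (rule sum_mono)
    fix s assume "s \<in> ?S"
    then have "s \<noteq> []" "length s \<le> n" and ls: "length s = l" using l by auto
    then show "real (card {c. length c = n \<and> subseq s c}) \<le> exp (real n * Hq q k * ln q)"
      using card_supseqs_le_exp_Hq[of s n] q k unfolding q_def k_def ls by blast
  qed
  also have "\<dots> \<le> real (length r choose (length r - l)) * exp (real n * Hq q k * ln q)"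
    using card_subseqs_le[of r l] l(3) by (simp add: binomial_symmetric[symmetric])
  also have "\<dots> \<le> exp (real n * subseq_rate q g k * ln q) * exp (real n * Hq q k * ln q)"
    using q k01 g by (intro mult_right_mono choose_le_exp_subseq_rate) auto
  also have "\<dots> = exp (real n * insdel_obj q g k * ln q)"
    by (simp add: insdel_obj_eq algebra_simps flip: exp_add)
  finally show ?thesis .
qed

lemma card_insdel_ball_le:
  fixes r :: "'a::finite list" and tau M :: real
  defines "q \<equiv> real CARD('a)"
  assumes q: "q \<ge> 3" and tau: "0 \<le> tau" "tau < (q - 1) / q" and n: "n \<ge> 1"
    and bound: "\<And>g k. 0 \<le> g \<Longrightarrow> g < q - 1 \<Longrightarrow> 0 \<le> k \<Longrightarrow> k < (q - 1) / q \<Longrightarrow> g + k = tau \<Longrightarrow>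
                  insdel_obj q g k \<le> M"
  shows "real (card {c. length c = n \<and> real (insdel_dist r c) \<le> tau * real n})
           \<le> real (n + 1) * exp (real n * M * ln q)"
proof -
  let ?L = "{l. l \<le> n \<and> l \<le> length r \<and> real (length r + n) \<le> tau * real n + 2 * real l}"
  let ?U = "\<lambda>l. \<Union>s\<in>{s. subseq s r \<and> length s = l}. {c :: 'a list. length c = n \<and> subseq s c}"
  have tau1: "tau < 1" using tau q by (smt (verit) divide_less_eq_1)
  have per_l: "real (card (?U l)) \<le> exp (real n * M * ln q)" if l: "l \<in> ?L" for l
  proof -
    define k where "k = real (n - l) / real n"
    have nk: "real (n - l) = k * real n" using n by (simp add: k_def)
    have "real (n - l) \<le> tau * real n" using l by (simp add: of_nat_diff)
    then have "k \<le> tau" using n by (simp add: k_def divide_le_eq)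
    moreover have "1 \<le> l"
    proof (rule ccontr)
      assume "\<not> 1 \<le> l"
      then have "real n \<le> tau * real n" using l by simp
      with tau1 n show False by (simp add: mult_le_cancel_right1)
    qed
    moreover have "real (length r - l) \<le> (tau - k) * real n"
      using l nk by (simp add: of_nat_diff algebra_simps)
    ultimately have "real (card (?U l)) \<le> exp (real n * insdel_obj q (tau - k) k * ln q)"
      using q tau l unfolding q_def k_def by (intro card_supseqs_of_subseqs_le) auto
    also have "\<dots> \<le> exp (real n * M * ln q)"
    proof -
      have "0 \<le> k" by (simp add: k_def)
      then have "insdel_obj q (tau - k) k \<le> M"
        using bound[of "tau - k" k] \<open>k \<le> tau\<close> tau tau1 q by simp
      then show ?thesis using q by (simp add: mult_left_mono mult_right_mono)
    qed
    finally show ?thesis .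
  qed
  have "real (card {c. length c = n \<and> real (insdel_dist r c) \<le> tau * real n}) \<le> real (card (\<Union>l\<in>?L. ?U l))"
    using insdel_ball_subset_supseqs[of n r "tau * real n"]
    by (intro of_nat_mono card_mono) (auto intro: finite_subset[OF _ finite_lists_length])
  also have "\<dots> \<le> (\<Sum>l\<in>?L. real (card (?U l)))"
    unfolding of_nat_sum[symmetric] of_nat_le_iff by (rule card_UN_le) simp
  also have "\<dots> \<le> (\<Sum>l\<in>?L. exp (real n * M * ln q))"
    by (rule sum_mono) (rule per_l)
  also have "\<dots> = real (card ?L) * exp (real n * M * ln q)"
    by simp
  also have "\<dots> \<le> real (n + 1) * exp (real n * M * ln q)"
  proof -
    have "card ?L \<le> card {..n}" by (rule card_mono) auto
    then show ?thesis by (intro mult_right_mono) auto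
  qed
  finally show ?thesis .
qed

section \<open>The union bound\<close>

lemma union_bound_arith:
  fixes q M eps :: real and n k t :: nat
  assumes q: "q > 1" and k: "real k \<le> (1 - M - eps) * real n" and t: "real t * eps \<ge> 4"
    and n: "2 * (2 * real n + 1) * (real n + 1) ^ t \<le> q ^ n"
  shows "(2 * real n + 1) * q ^ (2 * n) * q ^ (k * t) * ((real n + 1) * exp (real n * M * ln q)) ^ t
           * q ^ (n * k) / q ^ (n * t) \<le> q ^ (n * k) / (2 * q ^ n)"
proof -
  have pow: "q ^ m = exp (real m * ln q)" for m using q by (simp add: exp_of_nat_mult)
  have "real (2 * n) + real (k * t) - real (n * t) + real t * real n * M = real t * (real k + real n * M - real n) + 2 * real n"
    by (simp add: algebra_simps)
  also have "\<dots> \<le> real t * (- eps * real n) + 2 * real n"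
    using k by (intro add_right_mono mult_left_mono) (auto simp: algebra_simps)
  also have "\<dots> \<le> - 2 * real n"
    using t mult_right_mono[OF t, of "real n"] by (simp add: algebra_simps)
  finally have expo: "ln q * (real (2 * n) + real (k * t) - real (n * t) + real t * real n * M) \<le> ln q * (- 2 * real n)"
    using q by (intro mult_left_mono) auto
  have "q ^ (2 * n) * q ^ (k * t) * exp (real n * M * ln q) ^ t / q ^ (n * t)
      = exp (ln q * (real (2 * n) + real (k * t) - real (n * t) + real t * real n * M))"
    unfolding pow by (simp add: exp_add exp_diff flip: exp_of_nat_mult) (simp add: algebra_simps exp_add exp_diff)
  also have "\<dots> \<le> exp (ln q * (- 2 * real n))" using expo by simp
  also have "\<dots> = 1 / (q ^ n * q ^ n)"
    unfolding pow by (simp add: exp_minus exp_add[symmetric] divide_inverse algebra_simps)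
  finally have "q ^ (2 * n) * q ^ (k * t) * exp (real n * M * ln q) ^ t / q ^ (n * t) \<le> 1 / (q ^ n * q ^ n)" .
  note bound = this
  have "(2 * real n + 1) * q ^ (2 * n) * q ^ (k * t) * ((real n + 1) * exp (real n * M * ln q)) ^ t
           * q ^ (n * k) / q ^ (n * t)
      = (2 * real n + 1) * (real n + 1) ^ t * q ^ (n * k)
        * (q ^ (2 * n) * q ^ (k * t) * exp (real n * M * ln q) ^ t / q ^ (n * t))"
    by (simp only: power_mult_distrib times_divide_eq_right mult_ac)
  also have "\<dots> \<le> (2 * real n + 1) * (real n + 1) ^ t * q ^ (n * k) * (1 / (q ^ n * q ^ n))"
    using q bound by (intro mult_left_mono) auto
  also have "\<dots> = (2 * real n + 1) * (real n + 1) ^ t * q ^ (n * k) / (q ^ n * q ^ n)"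
    by simp
  also have "\<dots> \<le> q ^ n / 2 * q ^ (n * k) / (q ^ n * q ^ n)"
  proof -
    have "2 * ((2 * real n + 1) * (real n + 1) ^ t) \<le> q ^ n" using n by (simp only: mult.assoc)
    then show ?thesis using q by (intro divide_right_mono mult_right_mono) auto
  qed
  also have "\<dots> = q ^ (n * k) / (2 * q ^ n)" using q by (simp add: field_simps)
  finally show ?thesis .
qed

lemma card_lists_length_le:
  "real (card {r :: 'a::finite list. length r \<le> m}) \<le> (real m + 1) * real CARD('a) ^ m"
proof -
  have "card {r :: 'a list. length r \<le> m} \<le> card (\<Union>l\<in>{..m}. {r :: 'a list. length r = l})"
    by (rule card_mono) auto
  also have "\<dots> \<le> (\<Sum>l\<in>{..m}. CARD('a) ^ l)"
    using card_UN_le[of "{..m}" "\<lambda>l. {r :: 'a list. length r = l}"] by simp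
  also have "\<dots> \<le> (\<Sum>l\<in>{..m}. CARD('a) ^ m)"
    by (intro sum_mono power_increasing) (auto simp: Suc_leI)
  finally have "real (card {r :: 'a list. length r \<le> m}) \<le> real ((m + 1) * CARD('a) ^ m)"
    by (simp only: of_nat_le_iff) simp
  then show ?thesis by (simp add: algebra_simps)
qed

lemma not_list_decodable_imp_hitting:
  fixes vs :: "'a::{finite,field} list list" and tau L :: real
  assumes vs: "vs \<in> indep_tuples n k" and bad: "\<not> list_decodable n (lin_span n vs) tau L"
    and L: "real CARD('a) ^ t \<le> L" and tau: "tau \<le> 1"
  shows "\<exists>r cs. length r \<le> 2 * n \<and> length cs = Suc t \<and> set cs \<subseteq> {c. length c = k}
    \<and> lin_indep_on k {..<Suc t} ((!) cs)
    \<and> vs \<in> hitting_tuples n k {..<Suc t} ((!) cs) (\<lambda>_. {c. length c = n \<and> real (insdel_dist r c) \<le> tau * real n})"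
proof -
  let ?B = "\<lambda>r. {c. length c = n \<and> real (insdel_dist r c) \<le> tau * real n}"
  have lens: "\<forall>v\<in>set vs. length v = n" "length vs = k" using vs by (auto simp: indep_tuples_def)
  obtain m r where r: "real m \<le> real n + tau * real n" "length r = m"
    and many: "L < real (card (insdel_ball r (tau * real n) \<inter> lin_span n vs))"
    using bad unfolding list_decodable_def by (auto simp: not_le)
  have "tau * real n \<le> 1 * real n" using tau by (intro mult_right_mono) auto
  then have "length r \<le> 2 * n" using r by linarith
  define Y where "Y = {c :: 'a list. length c = k \<and> lin_comb n vs c \<in> ?B r}"
  have "insdel_ball r (tau * real n) \<inter> lin_span n vs \<subseteq> lin_comb n vs ` Y"
    using lens by (auto simp: lin_span_eq_image insdel_ball_def Y_def)
  then have "card (insdel_ball r (tau * real n) \<inter> lin_span n vs) \<le> card Y"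
    using card_mono[OF _ \<open>_ \<subseteq> lin_comb n vs ` Y\<close>] card_image_le[of Y "lin_comb n vs"]
    by (simp add: Y_def)
  then have "real (card (insdel_ball r (tau * real n) \<inter> lin_span n vs)) \<le> real (card Y)" by simp
  moreover have "real (CARD('a) ^ t) = real CARD('a) ^ t" by simp
  ultimately have "real (CARD('a) ^ t) < real (card Y)" using many L by linarith
  then have "CARD('a) ^ t < card Y" by (simp only: of_nat_less_iff)
  then obtain cs where cs: "length cs = Suc t" "set cs \<subseteq> Y" "lin_indep k cs"
    using exists_lin_indep_list[of Y k t] by (auto simp: Y_def)
  have csY: "cs ! i \<in> Y" if "i < Suc t" for i using cs that by (metis nth_mem subsetD)
  have "lin_indep_on k {..<Suc t} ((!) cs)"
    using lin_indep_iff_lin_indep_on[of cs k] cs by (auto simp: Y_def)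
  moreover have "vs \<in> hitting_tuples n k {..<Suc t} ((!) cs) (\<lambda>_. ?B r)"
    using lens csY by (auto simp: hitting_tuples_def tuples_def Y_def)
  ultimately show ?thesis using cs \<open>length r \<le> 2 * n\<close> by (auto simp: Y_def)
qed

lemma card_hitting_insdel_balls_le:
  fixes cs :: "'a::{finite,field} list list" and tau M :: real
  defines "q \<equiv> real CARD('a)"
  assumes q: "q \<ge> 3" and tau: "0 \<le> tau" "tau < (q - 1) / q" and n: "n \<ge> 1"
    and bound: "\<And>g k. 0 \<le> g \<Longrightarrow> g < q - 1 \<Longrightarrow> 0 \<le> k \<Longrightarrow> k < (q - 1) / q \<Longrightarrow> g + k = tau \<Longrightarrow>
                  insdel_obj q g k \<le> M"
    and cs: "length cs = s" "set cs \<subseteq> {c. length c = k}" "lin_indep_on k {..<s} ((!) cs)"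
  shows "real (card (hitting_tuples n k {..<s} ((!) cs)
                      (\<lambda>_. {c. length c = n \<and> real (insdel_dist r c) \<le> tau * real n}))) * q ^ (n * s)
           \<le> ((real n + 1) * exp (real n * M * ln q)) ^ s * q ^ (n * k)"
proof -
  let ?B = "{c. length c = n \<and> real (insdel_dist r c) \<le> tau * real n}"
  let ?H = "hitting_tuples n k {..<s} ((!) cs) (\<lambda>_. ?B)"
  have "length (cs ! i) = k" if "i \<in> {..<s}" for i
  proof -
    have "cs ! i \<in> set cs" using that cs(1) by simp
    then show ?thesis using cs(2) by blast
  qed
  then have "card ?H * CARD('a) ^ (n * s) \<le> card ?B ^ s * CARD('a) ^ (n * k)"
    using card_hitting_tuples[of "{..<s}" "(!) cs" k "\<lambda>_. ?B" n] cs by auto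
  then have "real (card ?H) * q ^ (n * s) \<le> real (card ?B) ^ s * q ^ (n * k)"
    unfolding q_def of_nat_power[symmetric] of_nat_mult[symmetric] of_nat_le_iff .
  also have "\<dots> \<le> ((real n + 1) * exp (real n * M * ln q)) ^ s * q ^ (n * k)"
    using card_insdel_ball_le[of tau n M r] q tau n bound
    by (intro mult_right_mono power_mono) (auto simp: q_def add.commute)
  finally show ?thesis .
qed

lemma card_not_list_decodable_le:
  fixes tau M eps L :: real and t n k :: nat
  defines "q \<equiv> real CARD('a::{finite,field})"
  assumes q: "q \<ge> 3" and tau: "0 \<le> tau" "tau < (q - 1) / q"
    and bound: "\<And>g k. 0 \<le> g \<Longrightarrow> g < q - 1 \<Longrightarrow> 0 \<le> k \<Longrightarrow> k < (q - 1) / q \<Longrightarrow> g + k = tau \<Longrightarrow>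
                  insdel_obj q g k \<le> M"
    and L: "q ^ t \<le> L" and n: "n \<ge> 1" and k: "real k \<le> (1 - M - eps) * real n" "k \<le> n"
    and t: "real (Suc t) * eps \<ge> 4" and big: "2 * (2 * real n + 1) * (real n + 1) ^ Suc t \<le> q ^ n"
  shows "real (card {vs \<in> (indep_tuples n k :: 'a list list set). \<not> list_decodable n (lin_span n vs) tau L})
           \<le> real (card (indep_tuples n k :: 'a list list set)) / q ^ n"
proof -
  let ?bad = "{vs \<in> (indep_tuples n k :: 'a list list set). \<not> list_decodable n (lin_span n vs) tau L}"
  let ?B = "\<lambda>r :: 'a list. {c. length c = n \<and> real (insdel_dist r c) \<le> tau * real n}"
  let ?H = "\<lambda>r cs. hitting_tuples n k {..<Suc t} ((!) cs) (\<lambda>_. ?B r)"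
  let ?R = "{r :: 'a list. length r \<le> 2 * n}"
  let ?CS = "{cs :: 'a list list. length cs = Suc t \<and> set cs \<subseteq> {c. length c = k} \<and> lin_indep_on k {..<Suc t} ((!) cs)}"
  define beta where "beta = (real n + 1) * exp (real n * M * ln q)"
  have q1: "q > 1" using q by simp
  have "(q - 1) / q \<le> 1" using q1 by simp
  then have tau1: "tau \<le> 1" using tau by linarith
  have L': "real CARD('a) ^ t \<le> L" using L by (simp add: q_def)
  have cover: "?bad \<subseteq> (\<Union>r\<in>?R. \<Union>cs\<in>?CS. ?H r cs)"
  proof
    fix vs assume "vs \<in> ?bad"
    then have "\<exists>r cs. length r \<le> 2 * n \<and> length cs = Suc t \<and> set cs \<subseteq> {c. length c = k}
        \<and> lin_indep_on k {..<Suc t} ((!) cs) \<and> vs \<in> ?H r cs"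
      using not_list_decodable_imp_hitting[OF _ _ L' tau1] by simp
    then show "vs \<in> (\<Union>r\<in>?R. \<Union>cs\<in>?CS. ?H r cs)" by blast
  qed
  have fin_H: "finite (?H r cs)" for r cs
    by (rule finite_subset[OF _ finite_tuples[of n k]]) (auto simp: hitting_tuples_def)
  have fin_CS: "finite ?CS"
    by (rule finite_subset[OF _ finite_lists_length_eq[of "{c :: 'a list. length c = k}" "Suc t"]]) auto
  have fin_R: "finite ?R" using finite_lists_length_le[of "UNIV :: 'a set" "2 * n"] by simp
  have card_H: "real (card (?H r cs)) \<le> beta ^ Suc t * q ^ (n * k) / q ^ (n * Suc t)" if "cs \<in> ?CS" for r cs
  proof -
    have "real (card (?H r cs)) * q ^ (n * Suc t) \<le> beta ^ Suc t * q ^ (n * k)"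
      using card_hitting_insdel_balls_le[where s="Suc t" and cs=cs and r=r and M=M] that q tau n bound
      unfolding beta_def q_def by blast
    then show ?thesis using q1 by (simp add: pos_le_divide_eq)
  qed
  have card_R: "real (card ?R) \<le> (2 * real n + 1) * q ^ (2 * n)"
    using card_lists_length_le[of "2 * n"] by (simp add: q_def)
  have "card ?CS \<le> card {cs. set cs \<subseteq> {c :: 'a list. length c = k} \<and> length cs = Suc t}"
    by (rule card_mono) (auto intro: finite_lists_length_eq)
  also have "\<dots> = CARD('a) ^ (k * Suc t)"
    by (simp add: card_lists_length_eq power_mult del: mult_Suc_right power_Suc)
  finally have card_CS: "real (card ?CS) \<le> q ^ (k * Suc t)"
    unfolding q_def of_nat_power[symmetric] of_nat_le_iff .
  have "real (card ?bad) \<le> (\<Sum>r\<in>?R. \<Sum>cs\<in>?CS. real (card (?H r cs)))"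
  proof -
    have "card ?bad \<le> card (\<Union>r\<in>?R. \<Union>cs\<in>?CS. ?H r cs)"
      using cover by (intro card_mono) (simp_all add: fin_R fin_CS fin_H)
    also have "\<dots> \<le> (\<Sum>r\<in>?R. card (\<Union>cs\<in>?CS. ?H r cs))"
      by (rule card_UN_le[OF fin_R])
    also have "\<dots> \<le> (\<Sum>r\<in>?R. \<Sum>cs\<in>?CS. card (?H r cs))"
      by (intro sum_mono card_UN_le fin_CS)
    finally show ?thesis unfolding of_nat_sum[symmetric] of_nat_le_iff .
  qed
  also have "\<dots> \<le> (\<Sum>r\<in>?R. \<Sum>cs\<in>?CS. beta ^ Suc t * q ^ (n * k) / q ^ (n * Suc t))"
    by (intro sum_mono card_H)
  also have "\<dots> = real (card ?R) * real (card ?CS) * (beta ^ Suc t * q ^ (n * k) / q ^ (n * Suc t))"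
    by simp
  also have "\<dots> \<le> (2 * real n + 1) * q ^ (2 * n) * q ^ (k * Suc t) * (beta ^ Suc t * q ^ (n * k) / q ^ (n * Suc t))"
    using card_R card_CS q1 by (intro mult_right_mono mult_mono) (auto simp: beta_def)
  also have "\<dots> \<le> q ^ (n * k) / (2 * q ^ n)"
    using union_bound_arith[OF q1 k(1) t big] by (simp add: beta_def mult.assoc)
  also have "\<dots> \<le> real (card (indep_tuples n k :: 'a list list set)) / q ^ n"
    using card_indep_tuples_ge_half[OF _ k(2)] q q1 by (simp add: q_def field_simps)
  finally show ?thesis .
qed

lemma card_list_decodable_ge:
  fixes tau L :: real and k n :: nat
  defines "q \<equiv> real CARD('a::{finite,field})"
  assumes bad: "real (card {vs \<in> (indep_tuples n k :: 'a list list set). \<not> list_decodable n (lin_span n vs) tau L})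
           \<le> real (card (indep_tuples n k :: 'a list list set)) / q ^ n"
  shows "real (card {vs \<in> (indep_tuples n k :: 'a list list set). list_decodable n (lin_span n vs) tau L})
           \<ge> (1 - q powr (- real n)) * real (card (indep_tuples n k :: 'a list list set))"
proof -
  let ?T = "indep_tuples n k :: 'a list list set"
  have "card ?T = card {vs \<in> ?T. list_decodable n (lin_span n vs) tau L}
      + card {vs \<in> ?T. \<not> list_decodable n (lin_span n vs) tau L}"
    by (subst card_Un_disjoint[symmetric]) (auto intro: arg_cong[where f=card])
  moreover have "q powr (- real n) = 1 / q ^ n"
    by (simp add: q_def powr_minus powr_realpow divide_inverse)
  ultimately show ?thesis using bad by (simp add: algebra_simps add_divide_distrib)
qed

lemma not_list_decodable_zero_dim:
  assumes "L \<ge> 1"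
  shows "{vs \<in> (indep_tuples n 0 :: 'a::{finite,field} list list set). \<not> list_decodable n (lin_span n vs) tau L} = {}"
proof -
  have "lin_span n [] = {replicate n (0::'a)}" by (auto simp: lin_span_def lincomb_def)
  then have "card (insdel_ball r z \<inter> lin_span n []) \<le> 1" for r :: "'a list" and z
    using card_mono[of "{replicate n (0::'a)}" "insdel_ball r z \<inter> lin_span n []"] by auto
  then have "list_decodable n (lin_span n ([] :: 'a list list)) tau L"
    using assms unfolding list_decodable_def by (meson order_trans of_nat_le_1_iff)
  then show ?thesis by (auto simp: indep_tuples_def)
qed

lemma eventually_poly_le_exp:
  fixes Q :: real assumes "Q > 1"
  shows "eventually (\<lambda>n. 2 * (2 * real n + 1) * (real n + 1) ^ t \<le> Q ^ n) sequentially"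
proof -
  have "((\<lambda>n::nat. 2 * (2 * real n + 1) * (real n + 1) ^ t / Q ^ n) \<longlongrightarrow> 0) sequentially"
    using assms by real_asymp
  then have "eventually (\<lambda>n. 2 * (2 * real n + 1) * (real n + 1) ^ t / Q ^ n < 1) sequentially"
    by (rule order_tendstoD) simp
  then show ?thesis by eventually_elim (use assms in \<open>simp add: divide_less_eq\<close>)
qed

lemma exists_list_size_exponent:
  fixes eps q :: real
  assumes eps: "0 < eps" "eps < 1" and q: "q > 1"
  obtains t :: nat where "real (Suc t) * eps \<ge> 4" "q ^ t \<le> exp (5 * ln q / eps)"
proof
  define t where "t = nat \<lceil>4 / eps\<rceil>"
  have "real t = real_of_int \<lceil>4 / eps\<rceil>" using eps by (simp add: t_def)
  then have t: "4 / eps \<le> real t" "real t \<le> 4 / eps + 1" by linarith+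
  show "real (Suc t) * eps \<ge> 4" using t(1) eps by (simp add: field_simps)
  have "1 \<le> 1 / eps" using eps by simp
  then have "real t * ln q \<le> 5 / eps * ln q" using t(2) q by (intro mult_right_mono) auto
  moreover have "q ^ t = exp (real t * ln q)" using q by (simp add: exp_of_nat_mult)
  ultimately show "q ^ t \<le> exp (5 * ln q / eps)" by simp
qed

lemma card_not_list_decodable_le_rate:
  fixes tau M eps L :: real and n t :: nat
  defines "q \<equiv> real CARD('a::{finite,field})" and "k \<equiv> nat \<lfloor>(1 - M - eps) * real n\<rfloor>"
  assumes q: "q \<ge> 3" and tau: "0 \<le> tau" "tau < q - 1 + (q - 1) / q"
    and bound: "\<And>g k. 0 \<le> g \<Longrightarrow> g < q - 1 \<Longrightarrow> 0 \<le> k \<Longrightarrow> k < (q - 1) / q \<Longrightarrow> g + k = tau \<Longrightarrow>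
                  insdel_obj q g k \<le> M"
    and M: "M \<ge> 0" and eps: "eps > 0" and L: "q ^ t \<le> L" "L \<ge> 1" and t: "real (Suc t) * eps \<ge> 4"
    and n: "n \<ge> 1" "2 * (2 * real n + 1) * (real n + 1) ^ Suc t \<le> q ^ n"
  shows "real (card {vs \<in> (indep_tuples n k :: 'a list list set). \<not> list_decodable n (lin_span n vs) tau L})
           \<le> real (card (indep_tuples n k :: 'a list list set)) / q ^ n"
proof (cases "k = 0")
  case True
  then have "{vs \<in> (indep_tuples n k :: 'a list list set). \<not> list_decodable n (lin_span n vs) tau L} = {}"
    using not_list_decodable_zero_dim[OF L(2)] by simp
  then show ?thesis unfolding \<open>_ = {}\<close> using q by simp
next
  case False
  then have k_le: "real k \<le> (1 - M - eps) * real n" unfolding k_def by linarith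
  moreover have "(1 - M - eps) * real n \<le> 1 * real n" using M eps by (intro mult_right_mono) auto
  ultimately have "k \<le> n" by linarith
  have "M < 1"
  proof (rule ccontr)
    assume "\<not> M < 1"
    then have "(1 - M - eps) * real n \<le> 0" using eps by (intro mult_nonpos_nonneg) auto
    then show False using False k_le by simp
  qed
  then have "tau < (q - 1) / q" using insdel_obj_bound_ge_1[OF q _ tau(2) bound] by force
  then show ?thesis
    using card_not_list_decodable_le[OF q[unfolded q_def] tau(1) _ bound[unfolded q_def] L(1)[unfolded q_def]
        n(1) k_le \<open>k \<le> n\<close> t n(2)[unfolded q_def]]
    by (simp add: q_def)
qed

lemma eventually_card_list_decodable_ge:
  fixes tau M eps :: real
  defines "q \<equiv> real CARD('a::{finite,field})"
  assumes q: "q \<ge> 3" and tau: "0 \<le> tau" "tau < q - 1 + (q - 1) / q"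
    and bound: "\<And>g k. 0 \<le> g \<Longrightarrow> g < q - 1 \<Longrightarrow> 0 \<le> k \<Longrightarrow> k < (q - 1) / q \<Longrightarrow> g + k = tau \<Longrightarrow>
                  insdel_obj q g k \<le> M"
    and M: "M \<ge> 0" and eps: "0 < eps" "eps < 1"
  shows "\<exists>N. \<forall>n\<ge>N.
    real (card {vs \<in> (indep_tuples n (nat \<lfloor>(1 - M - eps) * real n\<rfloor>) :: 'a list list set).
                 list_decodable n (lin_span n vs) tau (exp (5 * ln q / eps))})
      \<ge> (1 - q powr (- real n)) * real (card (indep_tuples n (nat \<lfloor>(1 - M - eps) * real n\<rfloor>) :: 'a list list set))"
proof -
  have q1: "q > 1" using q by simp
  obtain t where t: "real (Suc t) * eps \<ge> 4" "q ^ t \<le> exp (5 * ln q / eps)"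
    using exists_list_size_exponent[OF eps q1] .
  obtain N where N: "\<And>n. n \<ge> N \<Longrightarrow> 2 * (2 * real n + 1) * (real n + 1) ^ Suc t \<le> q ^ n"
    using eventually_poly_le_exp[OF q1, of "Suc t"] unfolding eventually_sequentially by blast
  have L: "exp (5 * ln q / eps) \<ge> 1" using q1 eps by simp
  show ?thesis
  proof (intro exI[of _ "max N 1"] allI impI)
    fix n assume "max N 1 \<le> n"
    then have n: "n \<ge> 1" "2 * (2 * real n + 1) * (real n + 1) ^ Suc t \<le> real CARD('a) ^ n"
      using N unfolding q_def by auto
    have "real (card {vs \<in> (indep_tuples n (nat \<lfloor>(1 - M - eps) * real n\<rfloor>) :: 'a list list set).
                 \<not> list_decodable n (lin_span n vs) tau (exp (5 * ln q / eps))})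
      \<le> real (card (indep_tuples n (nat \<lfloor>(1 - M - eps) * real n\<rfloor>) :: 'a list list set)) / q ^ n"
      using card_not_list_decodable_le_rate[OF q[unfolded q_def] tau[unfolded q_def] bound[unfolded q_def]
          M eps(1) t(2)[unfolded q_def] L[unfolded q_def] t(1) n]
      unfolding q_def .
    from card_list_decodable_ge[OF this[unfolded q_def]]
    show "real (card {vs \<in> (indep_tuples n (nat \<lfloor>(1 - M - eps) * real n\<rfloor>) :: 'a list list set).
                 list_decodable n (lin_span n vs) tau (exp (5 * ln q / eps))})
      \<ge> (1 - q powr (- real n)) * real (card (indep_tuples n (nat \<lfloor>(1 - M - eps) * real n\<rfloor>) :: 'a list list set))"
      unfolding q_def .
  qed
qed

theorem mainTheorem8:
  fixes tau gh kh :: real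
  assumes q3: "CARD('a::{finite,field}) \<ge> 3"
    and tau: "tau \<ge> 0"
    and gh: "0 \<le> gh" "gh < real CARD('a) - 1"
    and kh: "0 \<le> kh" "kh < (real CARD('a) - 1) / real CARD('a)"
    and sum: "gh + kh = tau"
    and maxim: "\<And>g k. 0 \<le> g \<Longrightarrow> g < real CARD('a) - 1 \<Longrightarrow> 0 \<le> k \<Longrightarrow>
                  k < (real CARD('a) - 1) / real CARD('a) \<Longrightarrow> g + k = tau \<Longrightarrow>
                  insdel_obj (real CARD('a)) g k \<le> insdel_obj (real CARD('a)) gh kh"
  shows "\<exists>C>0. \<exists>\<epsilon>0>0. \<forall>\<epsilon>. 0 < \<epsilon> \<and> \<epsilon> < \<epsilon>0 \<longrightarrow>
           (\<exists>N. \<forall>n\<ge>N.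
             (let q = real CARD('a);
                  R = 1 - insdel_obj q gh kh - \<epsilon>;
                  k = nat \<lfloor>R * real n\<rfloor>;
                  T = (indep_tuples n k :: 'a list list set)
              in real (card {vs \<in> T. list_decodable n (lin_span n vs) tau (exp (C / \<epsilon>))})
                   \<ge> (1 - q powr (- real n)) * real (card T)))"
proof -
  have q: "real CARD('a) \<ge> 3" using q3 by simp
  have feasible: "tau < real CARD('a) - 1 + (real CARD('a) - 1) / real CARD('a)"
    using gh kh sum by simp
  note eventually = eventually_card_list_decodable_ge[OF q tau feasible maxim insdel_obj_nonneg[OF q gh(1) kh]]
  have "\<forall>\<epsilon>. 0 < \<epsilon> \<and> \<epsilon> < 1 \<longrightarrow>
           (\<exists>N. \<forall>n\<ge>N.
             (let q = real CARD('a);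
                  R = 1 - insdel_obj q gh kh - \<epsilon>;
                  k = nat \<lfloor>R * real n\<rfloor>;
                  T = (indep_tuples n k :: 'a list list set)
              in real (card {vs \<in> T. list_decodable n (lin_span n vs) tau (exp (5 * ln q / \<epsilon>))})
                   \<ge> (1 - q powr (- real n)) * real (card T)))"
    unfolding Let_def using eventually by blast
  moreover have "5 * ln (real CARD('a)) > 0" using q by simp
  ultimately show ?thesis by (intro exI[of _ "5 * ln (real CARD('a))"] conjI exI[of _ "1 :: real"]) simp_all
qed

end
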